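(* Let $s$ be even and let $A_1,\ldots,A_{s/2}\in\mathbb{R}^{n\times n}$ be symmetric matrices satisfying $\sum_{j=1}^{s/2}j^2A_j=I$. Let $U:\mathbb{R}^n\to\mathbb{R}$ be smooth and consider the linear multistep method \[\sum_{j=1}^{s/2}A_j\big(y(t-jh)-2y(t)+y(t+jh)\big)=h^2\nabla U(y(t))\] for the ODE $\ddot y=\nabla U(y)$, with its modified equation $\ddot y=\nabla U(y)+\sum_{i=1}^N h^i g_i(y,\dot y)+\mathcal{O}(h^{N+1})$, where $N\in\mathbb{N}$ is the considered order of the series expansion. Let $z=(y,\dot y)$, $H(z)=\frac12\|\dot y\|^2-U(y)$ and $J=\begin{pmatrix}0&-I\\ I&0\end{pmatrix}$. Then there exist a modified symplectic structure $J^{[N]}_{\mathrm{mod}}$ which is $\mathcal{O}(h)$-close to $J$ and a modified Hamiltonian $H^{[N]}_{\mathrm{mod}}$ which is $\mathcal{O}(h)$-close to $H$ such that \[\dot z(t)=\big(J^{[N]}_{\mathrm{mod}}(z)\big)^{-1}\nabla H^{[N]}_{\mathrm{mod}}(z(t))\] is equivalent to the modified equation up to terms of order $\mathcal{O}(h^{N+1})$.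
   Context: $h$ is treated as a formal variable. The modified equation is obtained as follows: Taylor-expanding $y(t\pm jh)$ in the multistep formula in powers of $h$ and using $\sum_j j^2A_j=I$ yields an expression $\ddot y=\nabla U(y)+\sum_{i=1}^N h^i\tilde g_i(y,\dot y,\ldots,y^{(a_i)})+\mathcal{O}(h^{N+1})$ with $h$-independent $\tilde g_i$; iteratively replacing third and higher derivatives of $y$ on the right-hand side by derivatives of this expression itself gives $\ddot y=\nabla U(y)+\sum_{i=1}^N h^i g_i(y,\dot y)+\mathcal{O}(h^{N+1})$. $J^{[N]}_{\mathrm{mod}}$ and $H^{[N]}_{\mathrm{mod}}$ are polynomials in $h$ of degree at most $N$ whose coefficients are functions of $z$; $J^{[N]}_{\mathrm{mod}}$ is a skew-symmetric matrix-valued function representing a closed 2-form (symplectic structure). "$\mathcal{O}(h)$-close to $J$" means the zeroth coefficient of $J^{[N]}_{\mathrm{mod}}$ in $h$ equals $J$; analogously for $H$. *)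

theory Defs
  imports "HOL-Analysis.Analysis"
begin

definition dirderiv :: "('a::real_normed_vector \<Rightarrow> 'b::real_normed_vector) \<Rightarrow> 'a \<Rightarrow> 'a \<Rightarrow> 'b" where
  "dirderiv F z w = vector_derivative (\<lambda>t::real. F (z + t *\<^sub>R w)) (at 0)"

definition pd :: "(real^'m \<Rightarrow> 'b::real_normed_vector) \<Rightarrow> 'm \<Rightarrow> real^'m \<Rightarrow> 'b" where
  "pd F k z = dirderiv F z (axis k 1)"

definition grad :: "(real^'m \<Rightarrow> real) \<Rightarrow> real^'m \<Rightarrow> real^'m" where
  "grad F z = (\<chi> k. pd F k z)"

fun Ck :: "nat \<Rightarrow> ('a::real_normed_vector \<Rightarrow> 'b::real_normed_vector) \<Rightarrow> bool" where
  "Ck 0 F = continuous_on UNIV F"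
| "Ck (Suc k) F = (F differentiable_on UNIV \<and> (\<forall>w. Ck k (\<lambda>z. dirderiv F z w)))"

definition smooth :: "('a::real_normed_vector \<Rightarrow> 'b::real_normed_vector) \<Rightarrow> bool" where
  "smooth F = (\<forall>k. Ck k F)"

text \<open>Formal series (in h) of the right-hand side of the modified equation
  ddot y = f(y, dot y): coefficient 0 is grad U, coefficient i \<ge> 1 is g i.\<close>
definition fser :: "(real^'n \<Rightarrow> real) \<Rightarrow> (nat \<Rightarrow> real^'n \<Rightarrow> real^'n \<Rightarrow> real^'n)
    \<Rightarrow> nat \<Rightarrow> real^'n \<Rightarrow> real^'n \<Rightarrow> real^'n" where
  "fser U g i y v = (if i = 0 then grad U y else g i y v)"

text \<open>Total time derivative of a formal series G(y, dot y) (coefficients in h) along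
  solutions of ddot y = f(y, dot y), f a formal series:
  d/dt G = D_y G . dot y + D_v G . f, coefficientwise (Cauchy product in h).\<close>
definition Dt :: "(nat \<Rightarrow> real^'n \<Rightarrow> real^'n \<Rightarrow> real^'n)
    \<Rightarrow> (nat \<Rightarrow> real^'n \<Rightarrow> real^'n \<Rightarrow> real^'n)
    \<Rightarrow> nat \<Rightarrow> real^'n \<Rightarrow> real^'n \<Rightarrow> real^'n" where
  "Dt f G m y v = dirderiv (\<lambda>y'. G m y' v) y v
     + (\<Sum>a\<le>m. dirderiv (\<lambda>v'. G a y v') v (f (m - a) y v))"

fun Dpow :: "(nat \<Rightarrow> real^'n \<Rightarrow> real^'n \<Rightarrow> real^'n) \<Rightarrow> nat
    \<Rightarrow> (nat \<Rightarrow> real^'n \<Rightarrow> real^'n \<Rightarrow> real^'n)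
    \<Rightarrow> nat \<Rightarrow> real^'n \<Rightarrow> real^'n \<Rightarrow> real^'n" where
  "Dpow f 0 G = G"
| "Dpow f (Suc k) G = Dt f (Dpow f k G)"

definition moment :: "nat \<Rightarrow> (nat \<Rightarrow> real^'n^'n) \<Rightarrow> nat \<Rightarrow> real^'n^'n" where
  "moment s A k = (\<Sum>j=1..s div 2. (real j ^ (2*k)) *\<^sub>R A j)"

text \<open>Taylor expansion of the scheme, division by h^2 and sum_j j^2 A_j = I give
  ddot y = grad U(y) - sum_{k\<ge>2} 2 h^(2k-2)/(2k)! M_k y^(2k),
  and y^(2k) = (d/dt)^(2k-2) ddot y; the coefficients of h^m, 1 \<le> m \<le> N, must agree.
  (This triangular system determines g_1..g_N uniquely; it is exactly the result of
  the iterative replacement of higher derivatives.)\<close>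
definition is_modified_equation ::
  "nat \<Rightarrow> (nat \<Rightarrow> real^'n^'n) \<Rightarrow> (real^'n \<Rightarrow> real) \<Rightarrow> nat
     \<Rightarrow> (nat \<Rightarrow> real^'n \<Rightarrow> real^'n \<Rightarrow> real^'n) \<Rightarrow> bool" where
  "is_modified_equation s A U N g \<longleftrightarrow>
     (\<forall>m. 1 \<le> m \<and> m \<le> N \<longrightarrow> (\<forall>y v.
        g m y v = - (\<Sum>k=2..m div 2 + 1.
            (2 / fact (2*k)) *\<^sub>R (moment s A k *v Dpow (fser U g) (2*k - 2) (fser U g) (m - (2*k - 2)) y v))))"

definition yof :: "real^('n::finite + 'n) \<Rightarrow> real^'n" where
  "yof z = (\<chi> i. z $ Inl i)"

definition vof :: "real^('n::finite + 'n) \<Rightarrow> real^'n" where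
  "vof z = (\<chi> i. z $ Inr i)"

definition join :: "real^'n::finite \<Rightarrow> real^'n \<Rightarrow> real^('n + 'n)" where
  "join a b = (\<chi> k. case k of Inl i \<Rightarrow> a $ i | Inr i \<Rightarrow> b $ i)"

definition Jstd :: "real^('n::finite + 'n)^('n + 'n)" where
  "Jstd = (\<chi> a b. case (a, b) of
             (Inl i, Inr j) \<Rightarrow> (if i = j then -1 else 0)
           | (Inr i, Inl j) \<Rightarrow> (if i = j then 1 else 0)
           | _ \<Rightarrow> 0)"

definition Ham :: "(real^'n \<Rightarrow> real) \<Rightarrow> real^('n + 'n) \<Rightarrow> real" where
  "Ham U z = (1/2) * (norm (vof z))^2 - U (yof z)"

definition Fmod :: "(real^'n \<Rightarrow> real) \<Rightarrow> (nat \<Rightarrow> real^'n \<Rightarrow> real^'n \<Rightarrow> real^'n)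
    \<Rightarrow> nat \<Rightarrow> real^('n + 'n) \<Rightarrow> real^('n + 'n)" where
  "Fmod U g i z = (if i = 0 then join (vof z) (grad U (yof z))
                   else join 0 (g i (yof z) (vof z)))"

definition closed_2form :: "(real^'m \<Rightarrow> real^'m^'m) \<Rightarrow> bool" where
  "closed_2form J \<longleftrightarrow>
     (\<forall>z. transpose (J z) = - J z) \<and>
     (\<forall>z a b c. pd (\<lambda>x. J x $ a $ b) c z + pd (\<lambda>x. J x $ b $ c) a z
               + pd (\<lambda>x. J x $ c $ a) b z = 0)"

end

(*
  The modified equation is the Euler-Lagrange equation of a modified Lagrangian. With the moments
  M_k = sum_j j^(2k) A_j put

    L = U(y) + sum_(k >= 1) (-1)^(k+1) / (2k)! * h^(2k-2) * <y^(k), M_k y^(k)>,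

  where each derivative y^(k) is rewritten by means of the modified equation itself as a power
  series in h whose coefficients are smooth functions of z = (y, y'). Integrating the k-th term
  of dL by parts k times gives

    dL = Lie_F theta + sum_c E_c dy_c

  for an explicit 1-form theta, the modified vector field F, and the Euler-Lagrange residual E,
  whose coefficients of h^0, ..., h^N vanish precisely because of the recursion defining the g_i
  (since M_1 = I, the k = 1 term of E_c is just -y_c''). Cartan's formula turns this into
  i_F (d theta) = d (theta(F) - L) up to O(h^(N+1)), so J_mod = d theta is closed and
  H_mod = theta(F) - L is the modified Hamiltonian. For h = 0 one has theta = y' dy and
  L = |y'|^2 / 2 + U(y), which gives back J and H.
*)

theory Submission
  imports Defs "HOL-Library.Function_Algebras" "HOL-Computational_Algebra.Formal_Power_Series"
begin

section \<open>Smooth maps\<close>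

lemma dirderiv_has_derivative:
  assumes "(F has_derivative F') (at z)"
  shows "dirderiv F z w = F' w"
proof -
  have d1: "((\<lambda>t::real. z + t *\<^sub>R w) has_derivative (\<lambda>t. t *\<^sub>R w)) (at 0)"
    by (auto intro!: derivative_eq_intros)
  have d2: "(F has_derivative F') (at (z + 0 *\<^sub>R w))" using assms by simp
  have lin: "linear F'" using assms has_derivative_linear by blast
  have "((\<lambda>t::real. F (z + t *\<^sub>R w)) has_derivative (\<lambda>t. F' (t *\<^sub>R w))) (at 0)"
    using has_derivative_compose[OF d1 d2] by simp
  moreover have "(\<lambda>t. F' (t *\<^sub>R w)) = (\<lambda>t. t *\<^sub>R F' w)"
    using lin by (simp add: linear_scale)
  ultimately have "((\<lambda>t::real. F (z + t *\<^sub>R w)) has_vector_derivative F' w) (at 0)"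
    unfolding has_vector_derivative_def by simp
  then show ?thesis unfolding dirderiv_def by (rule vector_derivative_at)
qed

lemma Ck_SucD: "Ck (Suc k) F \<Longrightarrow> Ck k F"
proof (induction k arbitrary: F)
  case 0
  then show ?case by (auto intro: differentiable_imp_continuous_on)
next
  case (Suc k)
  then show ?case by auto
qed

lemma Ck_Suc_has_derivative:
  assumes "Ck (Suc k) F"
  shows "(F has_derivative (\<lambda>w. dirderiv F z w)) (at z)"
proof -
  have "F differentiable (at z)" using assms
    by (auto simp: differentiable_on_def)
  then obtain F' where F': "(F has_derivative F') (at z)" by (auto simp: differentiable_def)
  have "F' = (\<lambda>w. dirderiv F z w)" using dirderiv_has_derivative[OF F'] by auto
  then show ?thesis using F' by simp
qed

lemma smooth_has_derivative: "smooth F \<Longrightarrow> (F has_derivative (\<lambda>w. dirderiv F z w)) (at z)"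
  unfolding smooth_def using Ck_Suc_has_derivative by blast

lemma smooth_dirderiv: "smooth F \<Longrightarrow> smooth (\<lambda>z. dirderiv F z w)"
  unfolding smooth_def by (metis Ck.simps(2))

lemma smooth_pd: "smooth F \<Longrightarrow> smooth (pd F k)"
  unfolding pd_def[abs_def] using smooth_dirderiv by blast

lemma smooth_imp_continuous_on: "smooth F \<Longrightarrow> continuous_on UNIV F"
  unfolding smooth_def by (metis Ck.simps(1))

lemma Ck_const: "Ck k (\<lambda>z. c)"
proof (induction k arbitrary: c)
  case 0 then show ?case by simp
next
  case (Suc k)
  have e: "dirderiv (\<lambda>z. c) z w = 0" for z w
    by (rule dirderiv_has_derivative) (rule has_derivative_const)
  show ?case using Suc by (simp add: e)
qed

lemma Ck_add: "Ck k f \<Longrightarrow> Ck k g \<Longrightarrow> Ck k (\<lambda>z. f z + g z)"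
proof (induction k arbitrary: f g)
  case 0 then show ?case by (auto intro: continuous_on_add)
next
  case (Suc k)
  have "(\<lambda>z. dirderiv (\<lambda>z. f z + g z) z w) = (\<lambda>z. dirderiv f z w + dirderiv g z w)" for w
    by (rule ext, rule dirderiv_has_derivative, rule has_derivative_add)
       (use Suc.prems Ck_Suc_has_derivative in blast)+
  then show ?case using Suc
    by (auto intro: differentiable_on_add)
qed

lemma Ck_bilinear:
  assumes bl: "bounded_bilinear bp"
  shows "Ck k f \<Longrightarrow> Ck k g \<Longrightarrow> Ck k (\<lambda>z. bp (f z) (g z))"
proof (induction k arbitrary: f g)
  case 0 then show ?case
    using bounded_bilinear.continuous_on[OF bl] by auto
next
  case (Suc k)
  have "(\<lambda>z. dirderiv (\<lambda>z. bp (f z) (g z)) z w)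
      = (\<lambda>z. bp (f z) (dirderiv g z w) + bp (dirderiv f z w) (g z))" for w
    by (rule ext, rule dirderiv_has_derivative, rule bounded_bilinear.FDERIV[OF bl])
       (use Suc.prems Ck_Suc_has_derivative in blast)+
  moreover have "(\<lambda>z. bp (f z) (g z)) differentiable_on UNIV"
  proof -
    have "\<And>z. ((\<lambda>z. bp (f z) (g z)) has_derivative
        (\<lambda>h. bp (f z) (dirderiv g z h) + bp (dirderiv f z h) (g z))) (at z)"
      by (rule bounded_bilinear.FDERIV[OF bl]) (use Suc.prems Ck_Suc_has_derivative in blast)+
    then show ?thesis by (auto simp: differentiable_on_def differentiable_def)
  qed
  moreover have "Ck k f" "Ck k g" using Suc.prems Ck_SucD by blast+
  ultimately show ?case using Suc
    by (auto intro!: Ck_add)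
qed

lemma Ck_bounded_linear_comp:
  assumes bl: "bounded_linear T"
  shows "Ck k f \<Longrightarrow> Ck k (\<lambda>z. T (f z))"
proof (induction k arbitrary: f)
  case 0 then show ?case
    using bounded_linear.continuous_on[OF bl] by auto
next
  case (Suc k)
  have d: "((\<lambda>z. T (f z)) has_derivative (\<lambda>h. T (dirderiv f z h))) (at z)" for z
    by (rule bounded_linear.has_derivative[OF bl]) (use Suc.prems Ck_Suc_has_derivative in blast)
  have "(\<lambda>z. dirderiv (\<lambda>z. T (f z)) z w) = (\<lambda>z. T (dirderiv f z w))" for w
    by (rule ext, rule dirderiv_has_derivative, rule d)
  moreover have "(\<lambda>z. T (f z)) differentiable_on UNIV"
    using d by (auto simp: differentiable_on_def differentiable_def)
  ultimately show ?case using Suc by auto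
qed

lemma Ck_comp_bounded_linear:
  assumes bl: "bounded_linear T"
  shows "Ck k f \<Longrightarrow> Ck k (\<lambda>z. f (T z))"
proof (induction k arbitrary: f)
  case 0 then show ?case
    using continuous_on_compose2[OF _ bounded_linear.continuous_on[OF bl continuous_on_id]]
    by auto
next
  case (Suc k)
  have d: "((\<lambda>z. f (T z)) has_derivative (\<lambda>h. dirderiv f (T z) (T h))) (at z)" for z
    by (rule has_derivative_compose[OF bounded_linear_imp_has_derivative[OF bl]])
       (use Suc.prems Ck_Suc_has_derivative in blast)
  have "(\<lambda>z. dirderiv (\<lambda>z. f (T z)) z w) = (\<lambda>z. dirderiv f (T z) (T w))" for w
    by (rule ext, rule dirderiv_has_derivative, rule d)
  moreover have "(\<lambda>z. f (T z)) differentiable_on UNIV"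
    using d by (auto simp: differentiable_on_def differentiable_def)
  ultimately show ?case using Suc by auto
qed

lemma Ck_id: "Ck k (\<lambda>z. z)"
proof (cases k)
  case 0 then show ?thesis by simp
next
  case (Suc j)
  have e: "dirderiv (\<lambda>z. z) z w = w" for z w
    by (rule dirderiv_has_derivative) (rule has_derivative_ident)
  show ?thesis using Suc by (simp add: e Ck_const)
qed

lemma smooth_const[simp, intro]: "smooth (\<lambda>z. c)" unfolding smooth_def by (simp add: Ck_const)
lemma smooth_id[intro]: "smooth (\<lambda>z. z)" unfolding smooth_def by (simp add: Ck_id)
lemma smooth_add[intro]: "smooth f \<Longrightarrow> smooth g \<Longrightarrow> smooth (\<lambda>z. f z + g z)"
  unfolding smooth_def by (simp add: Ck_add)
lemma smooth_bilinear: "bounded_bilinear bp \<Longrightarrow> smooth f \<Longrightarrow> smooth g \<Longrightarrow> smooth (\<lambda>z. bp (f z) (g z))"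
  unfolding smooth_def by (simp add: Ck_bilinear)
lemma smooth_bounded_linear_comp: "bounded_linear T \<Longrightarrow> smooth f \<Longrightarrow> smooth (\<lambda>z. T (f z))"
  unfolding smooth_def by (simp add: Ck_bounded_linear_comp)
lemma smooth_comp_bounded_linear: "bounded_linear T \<Longrightarrow> smooth f \<Longrightarrow> smooth (\<lambda>z. f (T z))"
  unfolding smooth_def by (simp add: Ck_comp_bounded_linear)

lemma smooth_mult[intro]: "smooth f \<Longrightarrow> smooth g \<Longrightarrow> smooth (\<lambda>z. (f z::real) * g z)"
  by (rule smooth_bilinear[OF bounded_bilinear_mult])
lemma smooth_scaleR[intro]: "smooth f \<Longrightarrow> smooth g \<Longrightarrow> smooth (\<lambda>z. f z *\<^sub>R g z)"
  by (rule smooth_bilinear[OF bounded_bilinear_scaleR])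
lemma smooth_uminus[intro]: "smooth f \<Longrightarrow> smooth (\<lambda>z. - f z)"
  by (rule smooth_bounded_linear_comp[OF bounded_linear_minus[OF bounded_linear_ident]])
lemma smooth_diff[intro]: "smooth f \<Longrightarrow> smooth g \<Longrightarrow> smooth (\<lambda>z. f z - g z)"
  using smooth_add[of f "\<lambda>z. - g z"] smooth_uminus[of g] by simp
lemma smooth_sum[intro]: "(\<And>i. i \<in> S \<Longrightarrow> smooth (f i)) \<Longrightarrow> smooth (\<lambda>z. \<Sum>i\<in>S. f i z)"
proof (induction S rule: infinite_finite_induct)
  case (insert x F) then show ?case
    using smooth_add[of "f x" "\<lambda>z. \<Sum>i\<in>F. f i z"] by simp
qed auto
lemma smooth_vec_nth[intro]: "smooth F \<Longrightarrow> smooth (\<lambda>z. F z $ i)"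
  by (rule smooth_bounded_linear_comp[OF bounded_linear_vec_nth])

lemma linear_axis: "linear (axis i :: 'a::real_vector \<Rightarrow> 'a^'k)"
  by (auto simp: linear_iff axis_def vec_eq_iff)

lemma vec_lambda_eq_sum_axis: "(\<chi> i. f i) = (\<Sum>i\<in>UNIV. axis i (f i))"
  by (simp add: vec_eq_iff axis_def if_distrib cong: if_cong)

lemma smooth_vec_lambda[intro]:
  "smooth (\<lambda>z. \<chi> i. f i z :: 'a::euclidean_space^'k)" if "\<And>i. smooth (f i)"
proof -
  have "(\<lambda>z. \<chi> i. f i z) = (\<lambda>z. \<Sum>i\<in>UNIV. axis i (f i z))"
    by (rule ext) (rule vec_lambda_eq_sum_axis)
  moreover have "smooth (\<lambda>z. \<Sum>i\<in>UNIV. axis i (f i z) :: 'a^'k)"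
  proof (rule smooth_sum)
    fix i
    have "bounded_linear (axis i :: 'a \<Rightarrow> 'a^'k)"
      using linear_axis linear_conv_bounded_linear by blast
    then show "smooth (\<lambda>z. axis i (f i z) :: 'a^'k)"
      using smooth_bounded_linear_comp that by blast
  qed
  ultimately show ?thesis by simp
qed

lemma dirderiv_eq_sum_pd:
  assumes "(F has_derivative F') (at z)"
  shows "dirderiv F z (w::real^'m) = (\<Sum>i\<in>UNIV. (w $ i) *\<^sub>R pd F i z)"
proof -
  have lin: "linear F'" using assms has_derivative_linear by blast
  have "dirderiv F z w = F' w" by (rule dirderiv_has_derivative[OF assms])
  also have "\<dots> = F' (\<Sum>i\<in>UNIV. (w $ i) *\<^sub>R axis i 1)"
    by (simp add: basis_expansion flip: scalar_mult_eq_scaleR)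
  also have "\<dots> = (\<Sum>i\<in>UNIV. (w $ i) *\<^sub>R F' (axis i 1))"
    using lin by (simp add: linear_sum linear_scale)
  also have "\<dots> = (\<Sum>i\<in>UNIV. (w $ i) *\<^sub>R pd F i z)"
    unfolding pd_def using dirderiv_has_derivative[OF assms] by simp
  finally show ?thesis .
qed

lemma smooth_dirderiv_along:
  assumes "smooth F" "smooth W"
  shows "smooth (\<lambda>z. dirderiv F z (W z :: real^'m))"
proof -
  have "(\<lambda>z. dirderiv F z (W z)) = (\<lambda>z. \<Sum>i\<in>UNIV. (W z $ i) *\<^sub>R pd F i z)"
    using dirderiv_eq_sum_pd[OF smooth_has_derivative[OF assms(1)]] by auto
  then show ?thesis using assms by (auto intro!: smooth_sum smooth_scaleR smooth_pd)
qed

lemma sum_fun_apply: "(\<Sum>i\<in>S. f i) x = (\<Sum>i\<in>S. f i x)"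
  by (induction S rule: infinite_finite_induct) auto

lemma smooth_fun_add[intro]: "smooth f \<Longrightarrow> smooth g \<Longrightarrow> smooth (f + g)"
  unfolding plus_fun_def by (rule smooth_add)
lemma smooth_fun_mult[intro]: "smooth f \<Longrightarrow> smooth g \<Longrightarrow> smooth (f * (g :: _ \<Rightarrow> real))"
  unfolding times_fun_def by (rule smooth_mult)
lemma smooth_fun_uminus[intro]: "smooth f \<Longrightarrow> smooth (- f)"
  unfolding fun_Compl_def by (rule smooth_uminus)
lemma smooth_fun_diff[intro]: "smooth f \<Longrightarrow> smooth g \<Longrightarrow> smooth (f - g)"
  unfolding fun_diff_def by (rule smooth_diff)
lemma smooth_fun_sum[intro]: "(\<And>i. i \<in> S \<Longrightarrow> smooth (f i)) \<Longrightarrow> smooth (\<Sum>i\<in>S. f i)"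
proof -
  assume "\<And>i. i \<in> S \<Longrightarrow> smooth (f i)"
  then have "smooth (\<lambda>x. \<Sum>i\<in>S. f i x)" by (rule smooth_sum)
  then show ?thesis by (simp add: sum_fun_apply[abs_def])
qed

lemma smooth_fun_zero[intro]: "smooth (0 :: _ \<Rightarrow> real)"
  unfolding zero_fun_def by (rule smooth_const)
lemma smooth_fun_one[intro]: "smooth (1 :: _ \<Rightarrow> real)"
  unfolding one_fun_def by (rule smooth_const)

lemma pd_has_derivative: "(F has_derivative F') (at z) \<Longrightarrow> pd F k z = F' (axis k 1)"
  unfolding pd_def by (rule dirderiv_has_derivative)

lemma pd_add: "smooth f \<Longrightarrow> smooth g \<Longrightarrow> pd (f + g) k = pd f k + pd g k"
proof (rule ext)
  fix z assume f: "smooth f" and g: "smooth g"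
  have "((\<lambda>z. f z + g z) has_derivative (\<lambda>w. dirderiv f z w + dirderiv g z w)) (at z)"
    by (rule has_derivative_add[OF smooth_has_derivative[OF f] smooth_has_derivative[OF g]])
  then have "pd (\<lambda>z. f z + g z) k z = dirderiv f z (axis k 1) + dirderiv g z (axis k 1)"
    by (rule pd_has_derivative)
  then show "pd (f + g) k z = (pd f k + pd g k) z"
    unfolding plus_fun_def by (simp add: pd_def)
qed

lemma pd_mult: "smooth f \<Longrightarrow> smooth g \<Longrightarrow> pd (f * g) k = pd f k * g + f * (pd g k :: _ \<Rightarrow> real)"
proof (rule ext)
  fix z assume f: "smooth f" and g: "smooth g"
  have "((\<lambda>z. f z * g z) has_derivative (\<lambda>w. f z * dirderiv g z w + dirderiv f z w * g z)) (at z)"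
    by (rule has_derivative_mult[OF smooth_has_derivative[OF f] smooth_has_derivative[OF g]])
  then have "pd (\<lambda>z. f z * g z) k z = f z * dirderiv g z (axis k 1) + dirderiv f z (axis k 1) * g z"
    by (rule pd_has_derivative)
  then show "pd (f * g) k z = (pd f k * g + f * pd g k) z"
    unfolding times_fun_def plus_fun_def by (simp add: pd_def)
qed

lemma pd_const: "pd (\<lambda>z. c) k = (\<lambda>z. 0)"
  by (rule ext, rule pd_has_derivative[OF has_derivative_const])

lemma pd_uminus: "smooth f \<Longrightarrow> pd (- f) k = - pd f k"
proof (rule ext)
  fix z assume f: "smooth f"
  have "((\<lambda>z. - f z) has_derivative (\<lambda>w. - dirderiv f z w)) (at z)"
    by (rule has_derivative_minus[OF smooth_has_derivative[OF f]])
  then have "pd (\<lambda>z. - f z) k z = - dirderiv f z (axis k 1)"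
    by (rule pd_has_derivative)
  then show "pd (- f) k z = (- pd f k) z"
    unfolding fun_Compl_def by (simp add: pd_def)
qed

lemma pd_sum: "(\<And>i. i \<in> S \<Longrightarrow> smooth (f i)) \<Longrightarrow> pd (\<Sum>i\<in>S. f i) k = (\<Sum>i\<in>S. pd (f i) k)"
proof (induction S rule: infinite_finite_induct)
  case (infinite S) then show ?case by (simp add: pd_const zero_fun_def)
next
  case empty then show ?case by (simp add: pd_const zero_fun_def)
next
  case (insert x F)
  have "pd (\<Sum>i\<in>insert x F. f i) k = pd (f x + sum f F) k"
    by (subst sum.insert[OF insert(1,2)]) (rule refl)
  also have "\<dots> = pd (f x) k + pd (sum f F) k"
    using insert by (intro pd_add smooth_fun_sum) auto
  also have "\<dots> = pd (f x) k + (\<Sum>i\<in>F. pd (f i) k)"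
    using insert.IH insert.prems by simp
  also have "\<dots> = (\<Sum>i\<in>insert x F. pd (f i) k)"
    by (subst sum.insert[OF insert(1,2)]) (rule refl)
  finally show ?case .
qed

lemma pd_component: "pd (\<lambda>z::real^'m. z $ b) a = (\<lambda>z. if a = b then 1 else 0)"
proof (rule ext)
  fix z :: "real^'m"
  have "((\<lambda>z::real^'m. z $ b) has_derivative (\<lambda>h. h $ b)) (at z)"
    by (rule bounded_linear_imp_has_derivative[OF bounded_linear_vec_nth])
  then have "pd (\<lambda>z::real^'m. z $ b) a z = (\<lambda>h. h $ b) (axis a 1)"
    by (rule pd_has_derivative)
  then show "pd (\<lambda>z::real^'m. z $ b) a z = (if a = b then 1 else 0)"
    by (auto simp: axis_def)
qed

lemma pd_linear_combination:
  fixes r :: "'i \<Rightarrow> real"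
  assumes "\<And>i. i \<in> S \<Longrightarrow> smooth (g i)"
  shows "pd (\<lambda>x. \<Sum>i\<in>S. r i * g i x) c = (\<lambda>z. \<Sum>i\<in>S. r i * pd (g i) c z)"
proof (rule ext)
  fix z
  have "((\<lambda>x. \<Sum>i\<in>S. r i * g i x) has_derivative (\<lambda>h. \<Sum>i\<in>S. r i * dirderiv (g i) z h)) (at z)"
  proof (rule has_derivative_sum)
    fix i assume "i \<in> S"
    show "((\<lambda>x. r i * g i x) has_derivative (\<lambda>x. r i * dirderiv (g i) z x)) (at z)"
      by (rule has_derivative_mult_right[OF smooth_has_derivative[OF assms[OF \<open>i \<in> S\<close>]]])
  qed
  then have "pd (\<lambda>x. \<Sum>i\<in>S. r i * g i x) c z = (\<lambda>h. \<Sum>i\<in>S. r i * dirderiv (g i) z h) (axis c 1)"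
    by (rule pd_has_derivative)
  then show "pd (\<lambda>x. \<Sum>i\<in>S. r i * g i x) c z = (\<Sum>i\<in>S. r i * pd (g i) c z)"
    by (simp add: pd_def)
qed

section \<open>Symmetry of second derivatives\<close>

lemma dirderiv_scaleR: "smooth F \<Longrightarrow> dirderiv F p (h *\<^sub>R w) = h *\<^sub>R dirderiv F p w"
  using smooth_has_derivative[of F p] has_derivative_linear linear_scale by blast

lemma mvt_real_has_derivative:
  fixes G :: "real \<Rightarrow> real"
  assumes "s > 0" and "\<And>t. (G has_derivative (\<lambda>h. h * G' t)) (at t)"
  shows "\<exists>t. 0 < t \<and> t < s \<and> G s - G 0 = s * G' t"
proof -
  have "\<exists>x\<in>{0<..<s}. G s - G 0 = (\<lambda>h. h * G' x) (s - 0)"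
    by (rule mvt_simple[OF assms(1)]) (use assms(2) has_derivative_at_withinI in blast)
  then show ?thesis by auto
qed

lemma second_difference_mvt:
  fixes F :: "'a::real_normed_vector \<Rightarrow> real"
  assumes sm: "smooth F" and s: "s > 0"
  shows "\<exists>x. norm (x - z) \<le> s * (norm w + norm u) \<and>
    F (z + s *\<^sub>R w + s *\<^sub>R u) - F (z + s *\<^sub>R w) - F (z + s *\<^sub>R u) + F z
      = s * s * dirderiv (\<lambda>x. dirderiv F x w) x u"
proof -
  define Q where "Q x = dirderiv F x w" for x
  have smQ: "smooth Q" unfolding Q_def[abs_def] using sm smooth_dirderiv by blast
  define G where "G t = F (z + t *\<^sub>R w + s *\<^sub>R u) - F (z + t *\<^sub>R w)" for t
  have dG: "(G has_derivative (\<lambda>h. h * (Q (z + t *\<^sub>R w + s *\<^sub>R u) - Q (z + t *\<^sub>R w)))) (at t)" for t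
  proof -
    have d1: "((\<lambda>t. z + t *\<^sub>R w + s *\<^sub>R u) has_derivative (\<lambda>h. h *\<^sub>R w)) (at t)"
      by (auto intro!: derivative_eq_intros)
    have d2: "((\<lambda>t. z + t *\<^sub>R w) has_derivative (\<lambda>h. h *\<^sub>R w)) (at t)"
      by (auto intro!: derivative_eq_intros)
    have "(G has_derivative (\<lambda>h. dirderiv F (z + t *\<^sub>R w + s *\<^sub>R u) (h *\<^sub>R w)
             - dirderiv F (z + t *\<^sub>R w) (h *\<^sub>R w))) (at t)"
      unfolding G_def[abs_def]
      by (intro has_derivative_diff has_derivative_compose[OF d1 smooth_has_derivative[OF sm]]
          has_derivative_compose[OF d2 smooth_has_derivative[OF sm]])
    then show ?thesis by (simp add: dirderiv_scaleR[OF sm] Q_def right_diff_distrib)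
  qed
  obtain t where t: "0 < t" "t < s" and Gt: "G s - G 0
      = s * (Q (z + t *\<^sub>R w + s *\<^sub>R u) - Q (z + t *\<^sub>R w))"
    using mvt_real_has_derivative[OF s dG] by blast
  define K where "K r = Q (z + t *\<^sub>R w + r *\<^sub>R u)" for r
  have dK: "(K has_derivative (\<lambda>h. h * dirderiv Q (z + t *\<^sub>R w + r *\<^sub>R u) u)) (at r)" for r
  proof -
    have d1: "((\<lambda>r. z + t *\<^sub>R w + r *\<^sub>R u) has_derivative (\<lambda>h. h *\<^sub>R u)) (at r)"
      by (auto intro!: derivative_eq_intros)
    show ?thesis unfolding K_def[abs_def]
      using has_derivative_compose[OF d1 smooth_has_derivative[OF smQ]]
      by (simp add: dirderiv_scaleR[OF smQ])
  qed
  obtain r where r: "0 < r" "r < s" and Kr: "K s - K 0 = s * dirderiv Q (z + t *\<^sub>R w + r *\<^sub>R u) u"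
    using mvt_real_has_derivative[OF s dK] by blast
  define x where "x = z + t *\<^sub>R w + r *\<^sub>R u"
  have "x - z = t *\<^sub>R w + r *\<^sub>R u" by (simp add: x_def)
  then have "norm (x - z) \<le> norm (t *\<^sub>R w) + norm (r *\<^sub>R u)"
    by (simp only: norm_triangle_ineq)
  also have "\<dots> = t * norm w + r * norm u" using t r by simp
  also have "\<dots> \<le> s * norm w + s * norm u" using t r
    by (intro add_mono mult_right_mono) auto
  finally have nx: "norm (x - z) \<le> s * (norm w + norm u)" by (simp add: algebra_simps)
  have "F (z + s *\<^sub>R w + s *\<^sub>R u) - F (z + s *\<^sub>R w) - F (z + s *\<^sub>R u) + F z = G s - G 0"
    unfolding G_def by simp
  also have "\<dots> = s * (K s - K 0)" unfolding Gt K_def by simp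
  also have "\<dots> = s * s * dirderiv Q x u" unfolding Kr x_def by simp
  finally show ?thesis using nx unfolding Q_def[abs_def] by blast
qed

lemma eq_if_continuous_at_and_approx:
  fixes A B :: "'a::metric_space \<Rightarrow> 'b::metric_space"
  assumes "continuous (at z) A" "continuous (at z) B"
    and approx: "\<And>d. d > 0 \<Longrightarrow> \<exists>x y. dist x z < d \<and> dist y z < d \<and> A x = B y"
  shows "A z = B z"
proof (rule ccontr)
  assume "A z \<noteq> B z"
  define e where "e = dist (A z) (B z) / 2"
  have e: "e > 0" using \<open>A z \<noteq> B z\<close> by (simp add: e_def)
  obtain dA where dA: "dA > 0" "\<And>x. dist x z < dA \<Longrightarrow> dist (A x) (A z) < e"
    using assms(1) e unfolding continuous_at_eps_delta by blast
  obtain dB where dB: "dB > 0" "\<And>x. dist x z < dB \<Longrightarrow> dist (B x) (B z) < e"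
    using assms(2) e unfolding continuous_at_eps_delta by blast
  obtain x y where x: "dist x z < min dA dB" and y: "dist y z < min dA dB" and xy: "A x = B y"
    using approx[of "min dA dB"] dA(1) dB(1) by auto
  have "dist (A z) (B z) \<le> dist (A x) (A z) + dist (B y) (B z)"
    using dist_triangle[of "A z" "B z" "A x"] xy by (simp add: dist_commute)
  also have "\<dots> < 2 * e"
    using dA(2)[of x] dB(2)[of y] x y by simp
  finally have "dist (A z) (B z) < 2 * e" .
  then show False by (simp add: e_def)
qed

text \<open>Schwarz: by \<open>second_difference_mvt\<close> both mixed derivatives are limits of the same
  second difference quotient.\<close>

lemma dirderiv_commute:
  fixes F :: "'a::real_normed_vector \<Rightarrow> real"
  assumes sm: "smooth F"
  shows "dirderiv (\<lambda>x. dirderiv F x w) z u = dirderiv (\<lambda>x. dirderiv F x u) z w"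
proof (rule eq_if_continuous_at_and_approx[where A = "\<lambda>x. dirderiv (\<lambda>x. dirderiv F x w) x u"
      and B = "\<lambda>x. dirderiv (\<lambda>x. dirderiv F x u) x w"])
  show "continuous (at z) (\<lambda>x. dirderiv (\<lambda>x. dirderiv F x w) x u)"
    "continuous (at z) (\<lambda>x. dirderiv (\<lambda>x. dirderiv F x u) x w)"
    using smooth_imp_continuous_on[OF smooth_dirderiv[OF smooth_dirderiv[OF sm]]]
    by (simp_all add: continuous_on_eq_continuous_at)
  fix d :: real assume "d > 0"
  define s where "s = d / (norm w + norm u + 1)"
  have pos: "norm w + norm u + 1 > 0" by (intro add_nonneg_pos) simp_all
  then have s: "s > 0" using \<open>d > 0\<close> by (simp add: s_def)
  have "s * (norm w + norm u) < s * (norm w + norm u + 1)" using s by simp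
  also have "\<dots> = d" using pos by (simp add: s_def)
  finally have small: "s * (norm w + norm u) < d" .
  obtain x where x: "norm (x - z) \<le> s * (norm w + norm u)"
    "F (z + s *\<^sub>R w + s *\<^sub>R u) - F (z + s *\<^sub>R w) - F (z + s *\<^sub>R u) + F z
      = s * s * dirderiv (\<lambda>x. dirderiv F x w) x u"
    using second_difference_mvt[OF sm s] by blast
  obtain y where y: "norm (y - z) \<le> s * (norm u + norm w)"
    "F (z + s *\<^sub>R u + s *\<^sub>R w) - F (z + s *\<^sub>R u) - F (z + s *\<^sub>R w) + F z
      = s * s * dirderiv (\<lambda>x. dirderiv F x u) y w"
    using second_difference_mvt[OF sm s] by blast
  have swap: "z + s *\<^sub>R u + s *\<^sub>R w = z + s *\<^sub>R w + s *\<^sub>R u" by (simp add: algebra_simps)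
  have "s * s * dirderiv (\<lambda>x. dirderiv F x w) x u = s * s * dirderiv (\<lambda>x. dirderiv F x u) y w"
    using x(2) y(2) unfolding swap by linarith
  then have "dirderiv (\<lambda>x. dirderiv F x w) x u = dirderiv (\<lambda>x. dirderiv F x u) y w"
    using s by simp
  moreover have "dist x z < d" "dist y z < d"
    using x(1) y(1) small by (simp_all add: dist_norm add.commute)
  ultimately show "\<exists>x y. dist x z < d \<and> dist y z < d
      \<and> dirderiv (\<lambda>x. dirderiv F x w) x u = dirderiv (\<lambda>x. dirderiv F x u) y w"
    by blast
qed

section \<open>Power series in the step size with smooth coefficients\<close>

text \<open>The formal variable is the step size \<open>h\<close>; the coefficients are functions of the point \<open>z\<close>.\<close>

type_synonym 'm fun_fps = "(real^'m \<Rightarrow> real) fps"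

definition smooth_fps :: "'m::finite fun_fps \<Rightarrow> bool" where
  "smooth_fps p \<longleftrightarrow> (\<forall>i. smooth (fps_nth p i))"

definition pd_fps :: "'m::finite \<Rightarrow> 'm fun_fps \<Rightarrow> 'm fun_fps" where
  "pd_fps b p = Abs_fps (\<lambda>i. pd (fps_nth p i) b)"

definition scalar_fps :: "real \<Rightarrow> 'm::finite fun_fps" where
  "scalar_fps r = fps_const (\<lambda>z. r)"

lemma smooth_fps_add[simp, intro]: "smooth_fps p \<Longrightarrow> smooth_fps q \<Longrightarrow> smooth_fps (p + q)"
    unfolding smooth_fps_def by auto
lemma smooth_fps_uminus[simp, intro]: "smooth_fps p \<Longrightarrow> smooth_fps (- p)"
    unfolding smooth_fps_def by auto
lemma smooth_fps_diff[simp, intro]: "smooth_fps p \<Longrightarrow> smooth_fps q \<Longrightarrow> smooth_fps (p - q)"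
    unfolding smooth_fps_def by auto
lemma smooth_fps_mult[simp, intro]: "smooth_fps p \<Longrightarrow> smooth_fps q \<Longrightarrow> smooth_fps (p * q)"
  unfolding smooth_fps_def fps_mult_nth by (auto intro!: smooth_fun_sum smooth_fun_mult)
lemma smooth_fps_sum[simp, intro]: "(\<And>i. i \<in> S \<Longrightarrow> smooth_fps (f i)) \<Longrightarrow> smooth_fps (\<Sum>i\<in>S. f i)"
  unfolding smooth_fps_def fps_sum_nth by (auto intro!: smooth_fun_sum)
lemma smooth_fps_const[simp, intro]: "smooth c \<Longrightarrow> smooth_fps (fps_const c)"
    unfolding smooth_fps_def by auto
lemma smooth_fps_scalar_fps[simp, intro]: "smooth_fps (scalar_fps r)"
    unfolding scalar_fps_def by (auto intro!: smooth_fps_const)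
lemma smooth_fps_X_power[simp, intro]: "smooth_fps (fps_X ^ j)" unfolding smooth_fps_def by auto
lemma smooth_fps_pd_fps[simp, intro]: "smooth_fps p \<Longrightarrow> smooth_fps (pd_fps b p)"
    unfolding smooth_fps_def pd_fps_def by (auto intro: smooth_pd)

lemma pd_fps_add: "smooth_fps p \<Longrightarrow> smooth_fps q \<Longrightarrow> pd_fps b (p + q) = pd_fps b p + pd_fps b q"
  unfolding smooth_fps_def pd_fps_def by (auto simp: fps_eq_iff pd_add)
lemma pd_fps_uminus: "smooth_fps p \<Longrightarrow> pd_fps b (- p) = - pd_fps b p"
  unfolding smooth_fps_def pd_fps_def by (auto simp: fps_eq_iff pd_uminus)
lemma pd_fps_diff: "smooth_fps p \<Longrightarrow> smooth_fps q \<Longrightarrow> pd_fps b (p - q) = pd_fps b p - pd_fps b q"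
  using pd_fps_add[of p "-q" b] pd_fps_uminus[of q b] by simp
lemma pd_fps_sum: "(\<And>i. i \<in> S \<Longrightarrow> smooth_fps (f i)) \<Longrightarrow> pd_fps b (\<Sum>i\<in>S. f i) = (\<Sum>i\<in>S. pd_fps b (f i))"
  unfolding smooth_fps_def pd_fps_def by (auto simp: fps_eq_iff fps_sum_nth pd_sum)
lemma pd_fps_mult: "smooth_fps p \<Longrightarrow> smooth_fps q \<Longrightarrow> pd_fps b (p * q)
    = pd_fps b p * q + p * pd_fps b q"
proof -
  assume p: "smooth_fps p" and q: "smooth_fps q"
  show ?thesis
  proof (rule fps_ext)
    fix n
    have "fps_nth (pd_fps b (p * q)) n = pd (\<Sum>i=0..n. fps_nth p i * fps_nth q (n - i)) b"
      unfolding pd_fps_def by (simp add: fps_mult_nth)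
    also have "\<dots> = (\<Sum>i=0..n. pd (fps_nth p i * fps_nth q (n - i)) b)"
      using p q unfolding smooth_fps_def by (intro pd_sum smooth_fun_mult) auto
    also have "\<dots> = (\<Sum>i=0..n. pd (fps_nth p i) b * fps_nth q (n - i) + fps_nth p i
        * pd (fps_nth q (n - i)) b)"
      using p q unfolding smooth_fps_def by (intro sum.cong refl pd_mult) auto
    also have "\<dots> = fps_nth (pd_fps b p * q + p * pd_fps b q) n"
      unfolding pd_fps_def by (simp add: fps_mult_nth sum.distrib)
    finally show "fps_nth (pd_fps b (p * q)) n = fps_nth (pd_fps b p * q + p * pd_fps b q) n" .
  qed
qed
lemma pd_fps_zero[simp]: "pd_fps b 0 = 0"
  unfolding pd_fps_def by (simp add: fps_eq_iff zero_fun_def pd_const)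
lemma pd_fps_const_coeffs: "(\<And>i. \<exists>c. fps_nth p i = (\<lambda>z. c)) \<Longrightarrow> pd_fps b p = 0"
  unfolding pd_fps_def by (auto simp: fps_eq_iff zero_fun_def) (metis pd_const)
lemma pd_fps_scalar_fps[simp]: "pd_fps b (scalar_fps r) = 0"
  by (rule pd_fps_const_coeffs) (auto simp: scalar_fps_def zero_fun_def)
lemma pd_fps_X_power[simp]: "pd_fps b (fps_X ^ j) = 0"
  by (rule pd_fps_const_coeffs) (auto simp: zero_fun_def one_fun_def)
lemma pd_fps_const_coeffs_mult: "(\<And>i. \<exists>c. fps_nth p i = (\<lambda>z. c)) \<Longrightarrow> smooth_fps q \<Longrightarrow> pd_fps b (p * q)
    = p * pd_fps b q"
proof -
  assume c: "\<And>i. \<exists>c. fps_nth p i = (\<lambda>z. c)" and q: "smooth_fps q"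
  have "smooth_fps p" unfolding smooth_fps_def using c by (metis smooth_const)
  then show ?thesis using pd_fps_mult[of p q b] pd_fps_const_coeffs[OF c] q by simp
qed

lemma pd_fps_commute: "smooth_fps p \<Longrightarrow> pd_fps a (pd_fps b p) = pd_fps b (pd_fps a p)"
  unfolding smooth_fps_def pd_fps_def pd_def
  by (auto simp: fps_eq_iff intro!: ext dirderiv_commute)

lemma scalar_fps_mult: "scalar_fps (a * b) = scalar_fps a * scalar_fps b"
    unfolding scalar_fps_def by (simp add: times_fun_def)
lemma scalar_fps_add: "scalar_fps (a + b) = scalar_fps a + scalar_fps b"
    unfolding scalar_fps_def by (simp add: plus_fun_def)
lemma scalar_fps_uminus: "scalar_fps (- a) = - scalar_fps a"
    unfolding scalar_fps_def by (simp add: fun_Compl_def)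
lemma scalar_fps_zero[simp]: "scalar_fps 0 = 0" unfolding scalar_fps_def by (simp add: zero_fun_def)
lemma scalar_fps_one[simp]: "scalar_fps 1 = 1" unfolding scalar_fps_def by (simp add: one_fun_def)

lemma pd_fps_fps_const: "smooth \<phi> \<Longrightarrow> pd_fps a (fps_const \<phi>) = fps_const (pd \<phi> a)"
  unfolding pd_fps_def by (auto simp: fps_eq_iff zero_fun_def pd_const)

lemma scalar_fps_two: "scalar_fps 2 = 2"
proof -
  have "scalar_fps 2 = scalar_fps 1 + scalar_fps 1" unfolding scalar_fps_add[symmetric] by simp
  then show ?thesis by simp
qed

lemma scalar_X_power_const_coeffs: "\<exists>c. fps_nth (scalar_fps r * fps_X ^ j) i
    = (\<lambda>z::real^'m::finite. c)"
  by (rule exI[of _ "if i = j then r else 0"])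
      (auto simp: scalar_fps_def times_fun_def one_fun_def zero_fun_def)

lemma fps_nth_sum_apply: "fps_nth (\<Sum>b\<in>S. p b) m z = (\<Sum>b\<in>S. fps_nth (p b) m z)"
  by (simp add: fps_sum_nth sum_fun_apply)

lemma fps_nth_mult_apply: "fps_nth (p * q) m z = (\<Sum>i\<le>m. fps_nth p i z * fps_nth q (m - i) z)"
  by (simp add: fps_mult_nth sum_fun_apply atLeast0AtMost)

lemma fps_nth_scalar_X_power_mult: "fps_nth (scalar_fps r * fps_X ^ p * S) j z
    = (if p \<le> j then r * fps_nth S (j - p) z else 0)"
proof -
  have "scalar_fps r * fps_X ^ p * S = fps_const (\<lambda>z. r) * (fps_X ^ p * S)"
    by (simp add: scalar_fps_def mult.assoc)
  then show ?thesis by (simp add: fps_X_power_mult_nth times_fun_def)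
qed

lemma fps_nth_scalar_X_power_mult_0: "fps_nth (scalar_fps r * fps_X ^ p * S) 0 z
    = (if p = 0 then r * fps_nth S 0 z else 0)"
  using fps_nth_scalar_X_power_mult[of r p S 0 z] by simp

section \<open>Phase space\<close>

lemma linear_yof: "linear (yof :: real^('n::finite + 'n) \<Rightarrow> real^'n)"
  by (auto simp: linear_iff yof_def vec_eq_iff)
lemma bounded_linear_yof: "bounded_linear (yof :: real^('n::finite + 'n) \<Rightarrow> real^'n)"
  using linear_yof linear_conv_bounded_linear by blast

lemma smooth_vof[intro]: "smooth (vof :: real^('n::finite + 'n) \<Rightarrow> real^'n)"
  unfolding vof_def[abs_def] by (intro smooth_vec_lambda smooth_vec_nth smooth_id)
lemma smooth_join[intro]: "smooth (\<lambda>z. join (A z) (B z))" if "smooth A" "smooth B"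
  unfolding join_def
proof (intro smooth_vec_lambda)
  fix i
  show "smooth (\<lambda>z. case i of Inl x \<Rightarrow> A z $ x | Inr x \<Rightarrow> B z $ x)"
    using that by (cases i) (auto intro: smooth_vec_nth)
qed

lemma yof_join[simp]: "yof (join a b) = a" by (simp add: yof_def join_def vec_eq_iff)
lemma vof_join[simp]: "vof (join a b) = b" by (simp add: vof_def join_def vec_eq_iff)
lemma yof_add: "yof (x + y) = yof x + yof y" by (simp add: yof_def vec_eq_iff)
lemma vof_add: "vof (x + y) = vof x + vof y" by (simp add: vof_def vec_eq_iff)
lemma yof_scale: "yof (t *\<^sub>R x) = t *\<^sub>R yof x" by (simp add: yof_def vec_eq_iff)
lemma vof_scale: "vof (t *\<^sub>R x) = t *\<^sub>R vof x" by (simp add: vof_def vec_eq_iff)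
lemma join_zero[simp]: "join 0 0 = 0"
  by (simp add: join_def vec_eq_iff split: sum.splits)
lemma join_add: "join (a + a') (b + b') = join a b + join a' b'"
  by (simp add: join_def vec_eq_iff split: sum.splits)

lemma smooth_matrix_vector_mult: "smooth X \<Longrightarrow> smooth (\<lambda>z. (M::real^'a^'b) *v X z)"
  unfolding matrix_vector_mult_def
  by (intro smooth_vec_lambda smooth_sum smooth_mult smooth_const smooth_vec_nth)

lemma smooth_grad_yof: "smooth U \<Longrightarrow> smooth (\<lambda>z. grad U (yof z))"
  unfolding grad_def
  by (intro smooth_vec_lambda smooth_comp_bounded_linear[OF bounded_linear_yof] smooth_pd)

definition lifted_smooth :: "(nat \<Rightarrow> real^'n::finite \<Rightarrow> real^'n \<Rightarrow> real^'n) \<Rightarrow> bool" where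
  "lifted_smooth G \<longleftrightarrow> (\<forall>i. smooth (\<lambda>z::real^('n + 'n). G i (yof z) (vof z)))"

lemma Dt_eq_lifted_dirderiv:
  "Dt f G m (yof z) (vof z) = dirderiv (\<lambda>x. G m (yof x) (vof x)) z (join (vof z) 0)
     + (\<Sum>a\<le>m. dirderiv (\<lambda>x. G a (yof x) (vof x)) z (join 0 (f (m - a) (yof z) (vof z))))"
proof -
  have 1: "dirderiv (\<lambda>y'. G m y' (vof z)) (yof z) (vof z)
      = dirderiv (\<lambda>x. G m (yof x) (vof x)) z (join (vof z) 0)"
    unfolding dirderiv_def by (simp add: yof_add vof_add yof_scale vof_scale)
  have 2: "dirderiv (\<lambda>v'. G a (yof z) v') (vof z) (f (m - a) (yof z) (vof z))
       = dirderiv (\<lambda>x. G a (yof x) (vof x)) z (join 0 (f (m - a) (yof z) (vof z)))" for a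
    unfolding dirderiv_def by (simp add: yof_add vof_add yof_scale vof_scale)
  show ?thesis unfolding Dt_def 1 2 ..
qed

lemma lifted_smooth_Dt: "lifted_smooth f \<Longrightarrow> lifted_smooth G \<Longrightarrow> lifted_smooth (Dt f G)"
  unfolding lifted_smooth_def
proof
  fix m assume f: "\<forall>i. smooth (\<lambda>z. f i (yof z) (vof z))"
    and G: "\<forall>i. smooth (\<lambda>z. G i (yof z) (vof z))"
  show "smooth (\<lambda>z. Dt f G m (yof z) (vof z))"
    unfolding Dt_eq_lifted_dirderiv using f G
    by (intro smooth_add smooth_sum smooth_dirderiv_along smooth_join) auto
qed

lemma lifted_smooth_Dpow: "lifted_smooth f \<Longrightarrow> lifted_smooth G \<Longrightarrow> lifted_smooth (Dpow f k G)"
  by (induction k) (auto intro: lifted_smooth_Dt)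

lemma Dpow_cong:
  assumes "\<forall>i\<le>n. f1 i = f2 i" "\<forall>i\<le>n. G1 i = G2 i"
  shows "j \<le> n \<Longrightarrow> Dpow f1 k G1 j = Dpow f2 k G2 j"
proof (induction k arbitrary: j)
  case 0 then show ?case using assms by simp
next
  case (Suc k)
  have IH: "\<And>a. a \<le> j \<Longrightarrow> Dpow f1 k G1 a = Dpow f2 k G2 a" using Suc by auto
  have ff: "\<And>a. a \<le> j \<Longrightarrow> f1 (j - a) = f2 (j - a)" using Suc.prems assms(1) by auto
  show ?case
  proof (intro ext)
    fix y v
    show "Dpow f1 (Suc k) G1 j y v = Dpow f2 (Suc k) G2 j y v"
      unfolding Dpow.simps Dt_def using IH[of j] IH ff
      by (intro arg_cong2[where f="(+)"] sum.cong) auto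
  qed
qed

lemma sum_indicator_mult:
  "(\<Sum>d\<in>UNIV. (if (c::'a::finite) = d then 1 else 0) * (if c' = d then 1 else 0))
      = (if c = c' then 1 else (0::real))"
  by (simp add: if_distrib[of "\<lambda>x. x * _"] cong: if_cong)

section \<open>Time derivatives along the modified vector field\<close>

locale second_order_system =
  fixes f :: "nat \<Rightarrow> real^'n::finite \<Rightarrow> real^'n \<Rightarrow> real^'n"
  assumes smooth_f: "\<And>i. smooth (\<lambda>z::real^('n + 'n). f i (yof z) (vof z))"
begin

definition field_coeff :: "nat \<Rightarrow> real^('n + 'n) \<Rightarrow> real^('n + 'n)" where
  "field_coeff i z = join (if i = 0 then vof z else 0) (f i (yof z) (vof z))"

definition field_fps :: "('n + 'n) \<Rightarrow> ('n + 'n) fun_fps" where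
  "field_fps b = Abs_fps (\<lambda>i z. field_coeff i z $ b)"

text \<open>\<open>ddt\<close> is the time derivative along \<open>z' = \<Sum>i. h\<^sup>i field_coeff i z\<close>, the first-order form of
  \<open>y'' = \<Sum>i. h\<^sup>i f i y y'\<close>; \<open>ddt_form \<alpha>\<close> is the Lie derivative of the \<open>1\<close>-form \<open>\<Sum>a. \<alpha> a dz\<^sub>a\<close>
  along the same vector field.\<close>

definition ddt :: "('n + 'n) fun_fps \<Rightarrow> ('n + 'n) fun_fps" where
  "ddt p = (\<Sum>b\<in>UNIV. field_fps b * pd_fps b p)"

definition ddt_form :: "(('n + 'n) \<Rightarrow> ('n + 'n) fun_fps) \<Rightarrow> ('n + 'n) \<Rightarrow> ('n + 'n) fun_fps" where
  "ddt_form \<alpha> a = ddt (\<alpha> a) + (\<Sum>b\<in>UNIV. \<alpha> b * pd_fps a (field_fps b))"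

lemma smooth_field_coeff: "smooth (field_coeff i)"
  unfolding field_coeff_def[abs_def]
      using smooth_f[of i] by (cases "i = 0") (auto intro!: smooth_join)

lemma smooth_fps_field_fps[simp, intro]: "smooth_fps (field_fps b)"
  unfolding smooth_fps_def field_fps_def using smooth_field_coeff by (auto intro: smooth_vec_nth)

lemma smooth_fps_ddt[simp, intro]: "smooth_fps p \<Longrightarrow> smooth_fps (ddt p)"
  unfolding ddt_def by (auto intro!: smooth_fps_sum smooth_fps_mult smooth_fps_pd_fps)

lemma smooth_fps_ddt_pow[simp, intro]: "smooth_fps p \<Longrightarrow> smooth_fps ((ddt ^^ k) p)"
  by (induction k) auto

lemma ddt_diff: "smooth_fps p \<Longrightarrow> smooth_fps q \<Longrightarrow> ddt (p - q) = ddt p - ddt q"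
  unfolding ddt_def by (simp add: pd_fps_diff right_diff_distrib sum_subtractf)
lemma ddt_sum: "(\<And>i. i \<in> S \<Longrightarrow> smooth_fps (g i)) \<Longrightarrow> ddt (\<Sum>i\<in>S. g i) = (\<Sum>i\<in>S. ddt (g i))"
  unfolding ddt_def by (simp add: pd_fps_sum sum_distrib_left sum.swap[of _ UNIV S])
lemma ddt_mult: "smooth_fps p \<Longrightarrow> smooth_fps q \<Longrightarrow> ddt (p * q) = ddt p * q + p * ddt q"
  unfolding ddt_def by (simp add: pd_fps_mult algebra_simps sum.distrib sum_distrib_left
      sum_distrib_right)
lemma ddt_zero[simp]: "ddt 0 = 0" unfolding ddt_def by simp
lemma ddt_scalar_fps[simp]: "ddt (scalar_fps r) = 0" unfolding ddt_def by simp
lemma ddt_X_power[simp]: "ddt (fps_X ^ j) = 0" unfolding ddt_def by simp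
lemma ddt_scalar_mult: "smooth_fps p \<Longrightarrow> ddt (scalar_fps r * p) = scalar_fps r * ddt p"
  by (simp add: ddt_mult smooth_fps_scalar_fps)
lemma ddt_pow_scalar_mult: "smooth_fps p \<Longrightarrow> (ddt ^^ k) (scalar_fps r * p)
    = scalar_fps r * (ddt ^^ k) p"
  by (induction k) (auto simp: ddt_scalar_mult[OF smooth_fps_ddt_pow])
lemma ddt_pow_sum: "(\<And>i. i \<in> S \<Longrightarrow> smooth_fps (g i)) \<Longrightarrow> (ddt ^^ k) (\<Sum>i\<in>S. g i)
    = (\<Sum>i\<in>S. (ddt ^^ k) (g i))"
  by (induction k) (auto simp: ddt_sum smooth_fps_ddt_pow)

lemma ddt_form_diff: "(\<And>a. smooth_fps (\<alpha> a)) \<Longrightarrow> (\<And>a. smooth_fps (\<beta> a)) \<Longrightarrow>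
    ddt_form (\<lambda>a. \<alpha> a - \<beta> a) a = ddt_form \<alpha> a - ddt_form \<beta> a"
  unfolding ddt_form_def by (simp add: ddt_diff algebra_simps sum_subtractf)
lemma ddt_form_sum: "(\<And>i a. i \<in> S \<Longrightarrow> smooth_fps (\<alpha> i a)) \<Longrightarrow>
    ddt_form (\<lambda>a. \<Sum>i\<in>S. \<alpha> i a) a = (\<Sum>i\<in>S. ddt_form (\<alpha> i) a)"
  unfolding ddt_form_def by (simp add: ddt_sum sum.distrib sum_distrib_right sum.swap[of _ UNIV S])
lemma ddt_form_mult: "smooth_fps p \<Longrightarrow> (\<And>a. smooth_fps (\<alpha> a)) \<Longrightarrow>
    ddt_form (\<lambda>a. p * \<alpha> a) a = ddt p * \<alpha> a + p * ddt_form \<alpha> a"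
  unfolding ddt_form_def by (simp add: ddt_mult algebra_simps sum_distrib_left)
lemma ddt_form_pd: "smooth_fps p \<Longrightarrow> ddt_form (\<lambda>a. pd_fps a p) a = pd_fps a (ddt p)"
proof -
  assume p: "smooth_fps p"
  have "pd_fps a (ddt p) = (\<Sum>b\<in>UNIV. pd_fps a (field_fps b) * pd_fps b p + field_fps b
      * pd_fps a (pd_fps b p))"
    unfolding ddt_def using p by (simp add: pd_fps_sum pd_fps_mult smooth_fps_mult smooth_fps_pd_fps
        smooth_fps_field_fps)
  also have "\<dots> = (\<Sum>b\<in>UNIV. pd_fps a (field_fps b) * pd_fps b p + field_fps b
      * pd_fps b (pd_fps a p))"
    using p by (simp add: pd_fps_commute)
  also have "\<dots> = ddt_form (\<lambda>a. pd_fps a p) a"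
    unfolding ddt_form_def ddt_def by (simp add: sum.distrib algebra_simps)
  finally show ?thesis by simp
qed

definition ibp_form :: "nat \<Rightarrow> ('n + 'n) fun_fps \<Rightarrow> ('n + 'n) fun_fps \<Rightarrow> ('n + 'n) \<Rightarrow> ('n + 'n) fun_fps"
  where "ibp_form k u q a =
    (\<Sum>r<k. scalar_fps ((-1) ^ r) * (ddt ^^ r) u * pd_fps a ((ddt ^^ (k - 1 - r)) q))"

lemma smooth_fps_ibp_form[simp, intro]: "smooth_fps u \<Longrightarrow> smooth_fps q
    \<Longrightarrow> smooth_fps (ibp_form k u q a)"
  unfolding ibp_form_def
  by (intro smooth_fps_sum smooth_fps_mult smooth_fps_scalar_fps smooth_fps_ddt_pow
      smooth_fps_pd_fps)

lemma ibp_form_Suc: "ibp_form (Suc k) u q a = u * pd_fps a ((ddt ^^ k) q) - ibp_form k (ddt u) q a"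
proof -
  have "ibp_form (Suc k) u q a = u * pd_fps a ((ddt ^^ k) q)
      + (\<Sum>r<k. scalar_fps ((-1) ^ Suc r) * (ddt ^^ Suc r) u * pd_fps a ((ddt ^^ (k - 1 - r)) q))"
    unfolding ibp_form_def by (subst sum.lessThan_Suc_shift) simp
  also have "\<dots> = u * pd_fps a ((ddt ^^ k) q) - ibp_form k (ddt u) q a"
    unfolding ibp_form_def by (simp add: scalar_fps_uminus sum_negf funpow_Suc_right
        del: funpow.simps)
  finally show ?thesis .
qed

text \<open>The \<open>k\<close> time derivatives are moved from \<open>q\<close> to \<open>u\<close>; the boundary terms form a Lie derivative.\<close>

lemma integration_by_parts:
  assumes u: "smooth_fps u" and q: "smooth_fps q"
  shows "u * pd_fps a ((ddt ^^ k) q)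
    = ddt_form (ibp_form k u q) a + scalar_fps ((-1) ^ k) * (ddt ^^ k) u * pd_fps a q"
  using u
proof (induction k arbitrary: u a)
  case 0 then show ?case by (simp add: ddt_form_def ibp_form_def)
next
  case (Suc k)
  note u = Suc.prems
  have smq: "smooth_fps ((ddt ^^ j) q)" for j using q by auto
  have IH: "ddt u * pd_fps a ((ddt ^^ k) q)
      = ddt_form (ibp_form k (ddt u) q) a + scalar_fps ((-1) ^ k) * (ddt ^^ k) (ddt u) * pd_fps a q"
    using Suc.IH[of "ddt u" a] u by (auto simp: smooth_fps_ddt)
  have "u * pd_fps a ((ddt ^^ Suc k) q) = u * ddt_form (\<lambda>a. pd_fps a ((ddt ^^ k) q)) a"
    using smq by (simp add: ddt_form_pd)
  also have "\<dots> = ddt_form (\<lambda>a. u * pd_fps a ((ddt ^^ k) q)) a - ddt u * pd_fps a ((ddt ^^ k) q)"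
    using ddt_form_mult[of u "\<lambda>a. pd_fps a ((ddt ^^ k) q)" a] u smq by (simp add: smooth_fps_pd_fps)
  also have "\<dots> = ddt_form (\<lambda>a. u * pd_fps a ((ddt ^^ k) q)) a - ddt_form (ibp_form k (ddt u) q) a
      - scalar_fps ((-1) ^ k) * (ddt ^^ k) (ddt u) * pd_fps a q"
    unfolding IH by simp
  also have "\<dots> = ddt_form (\<lambda>a. u * pd_fps a ((ddt ^^ k) q) - ibp_form k (ddt u) q a) a
      + scalar_fps ((-1) ^ Suc k) * (ddt ^^ Suc k) u * pd_fps a q"
  proof -
    have "ddt_form (\<lambda>a. u * pd_fps a ((ddt ^^ k) q) - ibp_form k (ddt u) q a) a
        = ddt_form (\<lambda>a. u * pd_fps a ((ddt ^^ k) q)) a - ddt_form (ibp_form k (ddt u) q) a"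
      by (rule ddt_form_diff) (use u smq q in auto)
    moreover have "(ddt ^^ k) (ddt u) = (ddt ^^ Suc k) u"
      by (simp add: funpow_Suc_right del: funpow.simps)
    ultimately show ?thesis by (simp add: scalar_fps_uminus)
  qed
  also have "(\<lambda>a. u * pd_fps a ((ddt ^^ k) q) - ibp_form k (ddt u) q a) = ibp_form (Suc k) u q"
    by (intro ext) (simp add: ibp_form_Suc)
  finally show ?case .
qed

lemma lifted_smooth_f: "lifted_smooth f" unfolding lifted_smooth_def using smooth_f by auto

definition coeff_fps :: "(nat \<Rightarrow> real^'n \<Rightarrow> real^'n \<Rightarrow> real^'n) \<Rightarrow> 'n \<Rightarrow> ('n + 'n) fun_fps" where
  "coeff_fps G c = Abs_fps (\<lambda>i z. G i (yof z) (vof z) $ c)"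

lemma pd_vec_nth:
  assumes "smooth F"
  shows "pd (\<lambda>x. F x $ c) b z = pd F b z $ c"
proof -
  have "((\<lambda>x. F x $ c) has_derivative (\<lambda>h. dirderiv F z h $ c)) (at z)"
    by (rule bounded_linear.has_derivative[OF bounded_linear_vec_nth
        smooth_has_derivative[OF assms]])
  then show ?thesis by (subst pd_has_derivative) (auto simp: pd_def)
qed

lemma dirderiv_nth_eq_sum_pd:
  assumes "smooth F"
  shows "dirderiv F z w $ c = (\<Sum>b\<in>UNIV. w $ b * pd (\<lambda>x. F x $ c) b z)"
  using dirderiv_eq_sum_pd[OF smooth_has_derivative[OF assms], of z w]
  by (simp add: sum_component pd_vec_nth[OF assms])

lemma ddt_coeff_fps:
  assumes G: "lifted_smooth G"
  shows "ddt (coeff_fps G c) = coeff_fps (Dt f G) c"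
proof (rule fps_ext, rule ext)
  fix m z
  define pi where "pi j b = pd (\<lambda>x. G j (yof x) (vof x) $ c) b z" for j b
  have smG: "smooth (\<lambda>x. G j (yof x) (vof x))" for j using G unfolding lifted_smooth_def by auto
  have "fps_nth (ddt (coeff_fps G c)) m z = (\<Sum>b\<in>UNIV. \<Sum>i\<le>m. field_coeff i z $ b * pi (m - i) b)"
    unfolding ddt_def by (simp add: fps_nth_sum_apply fps_nth_mult_apply field_fps_def coeff_fps_def
        pd_fps_def pi_def)
  also have "\<dots> = (\<Sum>i\<le>m. \<Sum>b\<in>UNIV. field_coeff i z $ b * pi (m - i) b)" by (rule sum.swap)
  also have "\<dots> = (\<Sum>i\<le>m. (\<Sum>b\<in>UNIV. join (if i = 0 then vof z else 0) 0 $ b * pi (m - i) b)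
      + (\<Sum>b\<in>UNIV. join 0 (f i (yof z) (vof z)) $ b * pi (m - i) b))"
  proof (rule sum.cong[OF refl])
    fix i
    have "field_coeff i z = join (if i = 0 then vof z else 0) 0 + join 0 (f i (yof z) (vof z))"
      unfolding field_coeff_def join_add[symmetric] by simp
    then show "(\<Sum>b\<in>UNIV. field_coeff i z $ b * pi (m - i) b)
        = (\<Sum>b\<in>UNIV. join (if i = 0 then vof z else 0) 0 $ b * pi (m - i) b)
      + (\<Sum>b\<in>UNIV. join 0 (f i (yof z) (vof z)) $ b * pi (m - i) b)"
      by (simp add: distrib_right sum.distrib)
  qed
  also have "\<dots> = (\<Sum>i\<le>m. (if i = 0 then (\<Sum>b\<in>UNIV. join (vof z) 0 $ b * pi m b) else 0))
      + (\<Sum>i\<le>m. \<Sum>b\<in>UNIV. join 0 (f i (yof z) (vof z)) $ b * pi (m - i) b)"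
  proof -
    have jz: "(\<Sum>b\<in>UNIV. join (if i = 0 then vof z else 0) 0 $ b * pi (m - i) b)
       = (if i = 0 then (\<Sum>b\<in>UNIV. join (vof z) 0 $ b * pi m b) else 0)" for i
      by (cases "i = 0") simp_all
    show ?thesis by (simp only: sum.distrib jz)
  qed
  also have "(\<Sum>i\<le>m. (if i = 0 then (\<Sum>b\<in>UNIV. join (vof z) 0 $ b * pi m b) else 0))
      = (\<Sum>b\<in>UNIV. join (vof z) 0 $ b * pi m b)" by simp
  also have "(\<Sum>i\<le>m. \<Sum>b\<in>UNIV. join 0 (f i (yof z) (vof z)) $ b * pi (m - i) b)
      = (\<Sum>a\<le>m. \<Sum>b\<in>UNIV. join 0 (f (m - a) (yof z) (vof z)) $ b * pi a b)"
  proof -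
    have "(\<Sum>a\<le>m. \<Sum>b\<in>UNIV. join 0 (f (m - a) (yof z) (vof z)) $ b * pi a b)
        = (\<Sum>a<Suc m. (\<lambda>i. \<Sum>b\<in>UNIV. join 0 (f i (yof z) (vof z)) $ b * pi (m - i) b)
            (Suc m - Suc a))"
      by (simp add: lessThan_Suc_atMost)
    also have "\<dots> = (\<Sum>i<Suc m. \<Sum>b\<in>UNIV. join 0 (f i (yof z) (vof z)) $ b * pi (m - i) b)"
      by (rule sum.nat_diff_reindex)
    finally show ?thesis by (simp add: lessThan_Suc_atMost)
  qed
  also have "(\<Sum>b\<in>UNIV. join (vof z) 0 $ b * pi m b)
      + (\<Sum>a\<le>m. \<Sum>b\<in>UNIV. join 0 (f (m - a) (yof z) (vof z)) $ b * pi a b)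
      = fps_nth (coeff_fps (Dt f G) c) m z"
    unfolding coeff_fps_def fps_nth_Abs_fps Dt_eq_lifted_dirderiv pi_def
    by (simp add: dirderiv_nth_eq_sum_pd[OF smG] sum_component)
  finally show "fps_nth (ddt (coeff_fps G c)) m z = fps_nth (coeff_fps (Dt f G) c) m z" .
qed

lemma ddt_pow_coeff_fps: "lifted_smooth G \<Longrightarrow> (ddt ^^ k) (coeff_fps G c) = coeff_fps (Dpow f k G) c"
  by (induction k) (auto simp: ddt_coeff_fps lifted_smooth_Dpow lifted_smooth_f)

lemma ddt_component: "ddt (fps_const (\<lambda>z. z $ b0)) = field_fps b0"
proof -
  have "pd_fps b (fps_const (\<lambda>z. z $ b0)) = (if b = b0 then 1 else 0)" for b
    by (subst pd_fps_fps_const)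
        (auto intro: smooth_vec_nth simp: pd_component one_fun_def[symmetric]
        zero_fun_def[symmetric])
  then show ?thesis unfolding ddt_def by (simp add: if_distrib[of "\<lambda>x. _ * x"] cong: if_cong)
qed

end

section \<open>The modified Lagrangian\<close>

locale modified_lagrangian = second_order_system f
  for f :: "nat \<Rightarrow> real^'n::finite \<Rightarrow> real^'n \<Rightarrow> real^'n" +
  fixes U :: "real^'n \<Rightarrow> real" and M :: "nat \<Rightarrow> real^'n^'n" and K :: nat
  assumes smooth_U: "smooth U"
    and M_symmetric: "\<And>k. transpose (M k) = M k"
begin

text \<open>\<open>pos_ddt k c\<close> is the component \<open>c\<close> of \<open>y^(k)\<close>, expressed through the modified equation
  as a series in \<open>z\<close>. The \<open>1\<close>-form \<open>theta\<close> is what is left of \<open>dL\<close> after \<open>k\<close> integrations by parts in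
  the \<open>k\<close>-th term of \<open>lagrangian\<close>, and \<open>el_residual\<close> is the Euler-Lagrange expression of \<open>L\<close>.\<close>

definition pos_fps :: "'n \<Rightarrow> ('n + 'n) fun_fps" where
  "pos_fps c = fps_const (\<lambda>z. z $ Inl c)"

definition vel_fps :: "'n \<Rightarrow> ('n + 'n) fun_fps" where
  "vel_fps c = fps_const (\<lambda>z. z $ Inr c)"

definition pos_ddt :: "nat \<Rightarrow> 'n \<Rightarrow> ('n + 'n) fun_fps" where
  "pos_ddt r c = (ddt ^^ r) (pos_fps c)"

definition moment_fps :: "nat \<Rightarrow> 'n \<Rightarrow> 'n \<Rightarrow> ('n + 'n) fun_fps" where
  "moment_fps k c d = scalar_fps (M k $ c $ d)"

definition moment_pos_ddt :: "nat \<Rightarrow> 'n \<Rightarrow> ('n + 'n) fun_fps" where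
  "moment_pos_ddt k c = (\<Sum>d\<in>UNIV. moment_fps k c d * pos_ddt k d)"

definition lagr_coeff :: "nat \<Rightarrow> real" where
  "lagr_coeff k = (-1) ^ (k + 1) * 2 / fact (2 * k)"

definition eq_coeff :: "nat \<Rightarrow> real" where
  "eq_coeff k = 2 / fact (2 * k)"

definition potential_fps :: "('n + 'n) fun_fps" where
  "potential_fps = fps_const (\<lambda>z. U (yof z))"

definition lagrangian :: "('n + 'n) fun_fps" where
  "lagrangian = potential_fps + (\<Sum>k\<in>{1..K}. scalar_fps (lagr_coeff k / 2) * fps_X ^ (2 * k - 2)
      * (\<Sum>c\<in>UNIV. pos_ddt k c * moment_pos_ddt k c))"

definition theta_part :: "nat \<Rightarrow> 'n \<Rightarrow> ('n + 'n) \<Rightarrow> ('n + 'n) fun_fps" where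
  "theta_part k c = ibp_form k (moment_pos_ddt k c) (pos_fps c)"

definition theta :: "('n + 'n) \<Rightarrow> ('n + 'n) fun_fps" where
  "theta a = (\<Sum>k\<in>{1..K}. scalar_fps (lagr_coeff k) * fps_X ^ (2 * k - 2)
      * (\<Sum>c\<in>UNIV. theta_part k c a))"

definition grad_potential_fps :: "'n \<Rightarrow> ('n + 'n) fun_fps" where
  "grad_potential_fps c = fps_const (\<lambda>z. pd U c (yof z))"

definition el_residual :: "'n \<Rightarrow> ('n + 'n) fun_fps" where
  "el_residual c = grad_potential_fps c - (\<Sum>k\<in>{1..K}. scalar_fps (eq_coeff k) * fps_X ^ (2 * k - 2)
      * (\<Sum>d\<in>UNIV. moment_fps k c d * pos_ddt (2 * k) d))"

lemma smooth_fps_pos_fps[simp, intro]: "smooth_fps (pos_fps c)"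
  unfolding pos_fps_def by (intro smooth_fps_const smooth_vec_nth smooth_id)
lemma smooth_fps_vel_fps[simp, intro]: "smooth_fps (vel_fps c)"
  unfolding vel_fps_def by (intro smooth_fps_const smooth_vec_nth smooth_id)
lemma smooth_fps_pos_ddt[simp, intro]: "smooth_fps (pos_ddt r c)" unfolding pos_ddt_def by auto
lemma smooth_fps_moment_fps[simp, intro]: "smooth_fps (moment_fps k c d)"
    unfolding moment_fps_def by auto
lemma smooth_fps_moment_pos_ddt[simp, intro]: "smooth_fps (moment_pos_ddt k c)"
    unfolding moment_pos_ddt_def by (auto intro!: smooth_fps_sum smooth_fps_mult)
lemma smooth_fps_potential_fps[simp, intro]: "smooth_fps potential_fps"
  unfolding potential_fps_def by (intro smooth_fps_const
      smooth_comp_bounded_linear[OF bounded_linear_yof smooth_U])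
lemma smooth_fps_theta_part[simp, intro]: "smooth_fps (theta_part k c a)"
  unfolding theta_part_def by simp
lemma smooth_fps_theta[simp, intro]: "smooth_fps (theta a)"
  unfolding theta_def by (auto intro!: smooth_fps_sum smooth_fps_mult)
lemma smooth_fps_grad_potential_fps[simp, intro]: "smooth_fps (grad_potential_fps c)"
  unfolding grad_potential_fps_def
  by (intro smooth_fps_const smooth_comp_bounded_linear[OF bounded_linear_yof] smooth_pd
      smooth_U)
lemma smooth_fps_lagrangian[simp, intro]: "smooth_fps lagrangian"
  unfolding lagrangian_def by (auto intro!: smooth_fps_sum smooth_fps_mult smooth_fps_add)
lemma smooth_fps_el_residual[simp, intro]: "smooth_fps (el_residual c)"
  unfolding el_residual_def by (auto intro!: smooth_fps_sum smooth_fps_mult smooth_fps_diff)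

lemma pd_fps_pos_fps: "pd_fps a (pos_fps c) = fps_const (\<lambda>z. if a = Inl c then 1 else 0)"
  unfolding pos_fps_def by (subst pd_fps_fps_const) (auto intro: smooth_vec_nth simp: pd_component)

lemma pd_fps_potential_fps: "pd_fps a potential_fps
    = (\<Sum>c\<in>UNIV. grad_potential_fps c * pd_fps a (pos_fps c))"
proof -
  have "pd (\<lambda>z. U (yof z)) a = (\<lambda>z. \<Sum>c\<in>UNIV. pd U c (yof z) * (if a = Inl c then 1 else 0))"
  proof (rule ext)
    fix z :: "real^('n+'n)"
    have d: "((\<lambda>z. U (yof z)) has_derivative (\<lambda>h. dirderiv U (yof z) (yof h))) (at z)"
      by (rule has_derivative_compose[OF bounded_linear_imp_has_derivative[OF bounded_linear_yof]
          smooth_has_derivative[OF smooth_U]])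
    have "pd (\<lambda>z. U (yof z)) a z = dirderiv U (yof z) (yof (axis a 1))"
      by (rule pd_has_derivative[OF d])
    also have "\<dots> = (\<Sum>c\<in>UNIV. yof (axis a 1) $ c * pd U c (yof z))"
      using dirderiv_eq_sum_pd[OF smooth_has_derivative[OF smooth_U]] by simp
    also have "\<dots> = (\<Sum>c\<in>UNIV. pd U c (yof z) * (if a = Inl c then 1 else 0))"
      by (intro sum.cong) (auto simp: yof_def axis_def)
    finally show "pd (\<lambda>z. U (yof z)) a z
        = (\<Sum>c\<in>UNIV. pd U c (yof z) * (if a = Inl c then 1 else 0))" .
  qed
  then have "pd_fps a potential_fps
      = fps_const (\<lambda>z. \<Sum>c\<in>UNIV. pd U c (yof z) * (if a = Inl c then 1 else 0))"
    unfolding potential_fps_def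
    by (subst pd_fps_fps_const)
        (auto intro: smooth_comp_bounded_linear[OF bounded_linear_yof smooth_U])
  also have "\<dots> = (\<Sum>c\<in>UNIV. grad_potential_fps c * pd_fps a (pos_fps c))"
    unfolding grad_potential_fps_def pd_fps_pos_fps
    by (simp add: fps_eq_iff fps_sum_nth sum_fun_apply[abs_def] times_fun_def zero_fun_def)
  finally show ?thesis .
qed

lemma M_entry_symmetric: "M k $ c $ d = M k $ d $ c"
  using M_symmetric[of k] by (metis transpose_def vec_lambda_beta)

lemma pd_fps_quadratic: "pd_fps a (\<Sum>c\<in>UNIV. pos_ddt k c * moment_pos_ddt k c)
    = scalar_fps 2 * (\<Sum>c\<in>UNIV. moment_pos_ddt k c * pd_fps a (pos_ddt k c))"
proof -
  have "pd_fps a (\<Sum>c\<in>UNIV. pos_ddt k c * moment_pos_ddt k c)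
      = (\<Sum>c\<in>UNIV. pd_fps a (pos_ddt k c) * moment_pos_ddt k c)
          + (\<Sum>c\<in>UNIV. pos_ddt k c * pd_fps a (moment_pos_ddt k c))"
    by (simp add: pd_fps_sum pd_fps_mult smooth_fps_mult sum.distrib)
  also have "(\<Sum>c\<in>UNIV. pos_ddt k c * pd_fps a (moment_pos_ddt k c))
      = (\<Sum>c\<in>UNIV. \<Sum>d\<in>UNIV. pos_ddt k c * moment_fps k c d * pd_fps a (pos_ddt k d))"
    unfolding moment_pos_ddt_def
    by (simp add: pd_fps_sum smooth_fps_mult pd_fps_const_coeffs_mult moment_fps_def
        scalar_X_power_const_coeffs[where j=0, simplified]
        sum_distrib_left mult.assoc)
  also have "\<dots> = (\<Sum>d\<in>UNIV. \<Sum>c\<in>UNIV. pos_ddt k c * moment_fps k c d * pd_fps a (pos_ddt k d))"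
    by (rule sum.swap)
  also have "\<dots> = (\<Sum>d\<in>UNIV. (\<Sum>c\<in>UNIV. moment_fps k d c * pos_ddt k c) * pd_fps a (pos_ddt k d))"
  proof (rule sum.cong[OF refl])
    fix d
    show "(\<Sum>c\<in>UNIV. pos_ddt k c * moment_fps k c d * pd_fps a (pos_ddt k d))
        = (\<Sum>c\<in>UNIV. moment_fps k d c * pos_ddt k c) * pd_fps a (pos_ddt k d)"
      unfolding sum_distrib_right moment_fps_def M_entry_symmetric[of k _ d] by (simp add: ac_simps)
  qed
  also have "\<dots> = (\<Sum>d\<in>UNIV. moment_pos_ddt k d * pd_fps a (pos_ddt k d))"
    unfolding moment_pos_ddt_def ..
  finally have "pd_fps a (\<Sum>c\<in>UNIV. pos_ddt k c * moment_pos_ddt k c)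
      = (\<Sum>c\<in>UNIV. pd_fps a (pos_ddt k c) * moment_pos_ddt k c)
      + (\<Sum>d\<in>UNIV. moment_pos_ddt k d * pd_fps a (pos_ddt k d))" .
  moreover have "(\<Sum>c\<in>UNIV. pd_fps a (pos_ddt k c) * moment_pos_ddt k c)
      = (\<Sum>d\<in>UNIV. moment_pos_ddt k d * pd_fps a (pos_ddt k d))"
    by (simp only: mult.commute)
  ultimately show ?thesis unfolding scalar_fps_two mult_2 by simp
qed

lemma lagr_coeff_sign: "lagr_coeff k * (-1) ^ k = - eq_coeff k"
proof -
  have "(-1::real) ^ (k + 1) * (-1) ^ k = (-1) ^ (2 * k + 1)"
    by (simp add: power_add[symmetric] mult_2)
  also have "\<dots> = -1" by simp
  finally show ?thesis unfolding lagr_coeff_def eq_coeff_def by (simp add: field_simps)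
qed

lemma ddt_pow_moment_pos_ddt: "(ddt ^^ k) (moment_pos_ddt k c)
    = (\<Sum>d\<in>UNIV. moment_fps k c d * pos_ddt (2 * k) d)"
proof -
  have "(ddt ^^ k) (moment_pos_ddt k c) = (\<Sum>d\<in>UNIV. moment_fps k c d * (ddt ^^ k) (pos_ddt k d))"
    unfolding moment_pos_ddt_def moment_fps_def by (simp add: ddt_pow_sum ddt_pow_scalar_mult)
  also have "\<dots> = (\<Sum>d\<in>UNIV. moment_fps k c d * pos_ddt (2 * k) d)"
    unfolding pos_ddt_def by (simp add: mult_2 funpow_add)
  finally show ?thesis .
qed

lemma pd_lagrangian_expand: "pd_fps a lagrangian
    = (\<Sum>c\<in>UNIV. grad_potential_fps c * pd_fps a (pos_fps c))
   + (\<Sum>k\<in>{1..K}. scalar_fps (lagr_coeff k) * fps_X ^ (2 * k - 2)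
       * (\<Sum>c\<in>UNIV. moment_pos_ddt k c * pd_fps a (pos_ddt k c)))"
proof -
  have "pd_fps a lagrangian = pd_fps a potential_fps
      + (\<Sum>k\<in>{1..K}. pd_fps a (scalar_fps (lagr_coeff k / 2) * fps_X ^ (2 * k - 2)
      * (\<Sum>c\<in>UNIV. pos_ddt k c * moment_pos_ddt k c)))"
    unfolding lagrangian_def by (simp add: pd_fps_add pd_fps_sum)
  also have "(\<Sum>k\<in>{1..K}. pd_fps a
      (scalar_fps (lagr_coeff k / 2) * fps_X ^ (2 * k - 2)
      * (\<Sum>c\<in>UNIV. pos_ddt k c * moment_pos_ddt k c)))
     = (\<Sum>k\<in>{1..K}. scalar_fps (lagr_coeff k) * fps_X ^ (2 * k - 2)
         * (\<Sum>c\<in>UNIV. moment_pos_ddt k c * pd_fps a (pos_ddt k c)))"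
  proof (rule sum.cong[OF refl])
    fix k
    have "pd_fps a (scalar_fps (lagr_coeff k / 2) * fps_X ^ (2 * k - 2)
        * (\<Sum>c\<in>UNIV. pos_ddt k c * moment_pos_ddt k c))
        = scalar_fps (lagr_coeff k / 2) * fps_X ^ (2 * k - 2)
            * pd_fps a (\<Sum>c\<in>UNIV. pos_ddt k c * moment_pos_ddt k c)"
      by (rule pd_fps_const_coeffs_mult[OF scalar_X_power_const_coeffs]) simp
    also have "\<dots> = (scalar_fps (lagr_coeff k / 2) * scalar_fps 2) * fps_X ^ (2 * k - 2)
        * (\<Sum>c\<in>UNIV. moment_pos_ddt k c * pd_fps a (pos_ddt k c))"
      unfolding pd_fps_quadratic by (simp add: ac_simps)
    also have "scalar_fps (lagr_coeff k / 2) * scalar_fps 2 = scalar_fps (lagr_coeff k)"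
      by (simp add: scalar_fps_mult[symmetric])
    finally show "pd_fps a (scalar_fps (lagr_coeff k / 2) * fps_X ^ (2 * k - 2)
        * (\<Sum>c\<in>UNIV. pos_ddt k c * moment_pos_ddt k c))
        = scalar_fps (lagr_coeff k) * fps_X ^ (2 * k - 2)
            * (\<Sum>c\<in>UNIV. moment_pos_ddt k c * pd_fps a (pos_ddt k c))" .
  qed
  finally show ?thesis by (simp add: pd_fps_potential_fps)
qed

lemma moment_pos_ddt_pd_by_parts: "(\<Sum>c\<in>UNIV. moment_pos_ddt k c * pd_fps a (pos_ddt k c))
    = (\<Sum>c\<in>UNIV. ddt_form (theta_part k c) a)
    + (\<Sum>c\<in>UNIV. scalar_fps ((-1) ^ k) * (\<Sum>d\<in>UNIV. moment_fps k c d * pos_ddt (2 * k) d)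
        * pd_fps a (pos_fps c))"
proof -
  have "moment_pos_ddt k c * pd_fps a (pos_ddt k c) = ddt_form (theta_part k c) a
      + scalar_fps ((-1) ^ k) * (\<Sum>d\<in>UNIV. moment_fps k c d * pos_ddt (2 * k) d)
          * pd_fps a (pos_fps c)" for c
  proof -
    have "moment_pos_ddt k c * pd_fps a ((ddt ^^ k) (pos_fps c)) = ddt_form (theta_part k c) a
        + scalar_fps ((-1) ^ k) * (ddt ^^ k) (moment_pos_ddt k c) * pd_fps a (pos_fps c)"
      unfolding theta_part_def by (rule integration_by_parts) simp_all
    then show ?thesis unfolding pos_ddt_def[of k] ddt_pow_moment_pos_ddt .
  qed
  then show ?thesis by (simp add: sum.distrib)
qed

lemma ddt_form_theta: "ddt_form theta a
    = (\<Sum>k\<in>{1..K}. scalar_fps (lagr_coeff k) * fps_X ^ (2 * k - 2)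
    * (\<Sum>c\<in>UNIV. ddt_form (theta_part k c) a))"
proof -
  have "ddt_form theta a = ddt_form
      (\<lambda>a. \<Sum>k\<in>{1..K}. scalar_fps (lagr_coeff k) * fps_X ^ (2 * k - 2)
      * (\<Sum>c\<in>UNIV. theta_part k c a)) a"
    unfolding theta_def[abs_def] by (rule refl)
  also have "\<dots> = (\<Sum>k\<in>{1..K}. ddt_form
      (\<lambda>a. scalar_fps (lagr_coeff k) * fps_X ^ (2 * k - 2) * (\<Sum>c\<in>UNIV. theta_part k c a)) a)"
    by (rule ddt_form_sum) auto
  also have "\<dots> = (\<Sum>k\<in>{1..K}. scalar_fps (lagr_coeff k) * fps_X ^ (2 * k - 2)
      * (\<Sum>c\<in>UNIV. ddt_form (theta_part k c) a))"
  proof (rule sum.cong[OF refl])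
    fix k
    have "ddt_form (\<lambda>a. scalar_fps (lagr_coeff k) * fps_X ^ (2 * k - 2)
        * (\<Sum>c\<in>UNIV. theta_part k c a)) a
       = ddt (scalar_fps (lagr_coeff k) * fps_X ^ (2 * k - 2)) * (\<Sum>c\<in>UNIV. theta_part k c a)
         + scalar_fps (lagr_coeff k) * fps_X ^ (2 * k - 2)
             * ddt_form (\<lambda>a. \<Sum>c\<in>UNIV. theta_part k c a) a"
      by (rule ddt_form_mult) auto
    also have "ddt (scalar_fps (lagr_coeff k) * fps_X ^ (2 * k - 2)) = 0" by (simp add: ddt_mult)
    also have "ddt_form (\<lambda>a. \<Sum>c\<in>UNIV. theta_part k c a) a = (\<Sum>c\<in>UNIV. ddt_form (theta_part k c) a)"
      by (rule ddt_form_sum) auto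
    finally show "ddt_form (\<lambda>a. scalar_fps (lagr_coeff k) * fps_X ^ (2 * k - 2)
        * (\<Sum>c\<in>UNIV. theta_part k c a)) a
       = scalar_fps (lagr_coeff k) * fps_X ^ (2 * k - 2)
           * (\<Sum>c\<in>UNIV. ddt_form (theta_part k c) a)" by simp
  qed
  finally show ?thesis .
qed

lemma pd_lagrangian_eq: "pd_fps a lagrangian
    = ddt_form theta a + (\<Sum>c\<in>UNIV. el_residual c * pd_fps a (pos_fps c))"
proof -
  define V where "V k c = (\<Sum>d\<in>UNIV. moment_fps k c d * pos_ddt (2 * k) d)" for k c
  define C where "C k = (scalar_fps (lagr_coeff k)
      * fps_X ^ (2 * k - 2) :: ('n + 'n) fun_fps)" for k
  have "pd_fps a lagrangian = (\<Sum>c\<in>UNIV. grad_potential_fps c * pd_fps a (pos_fps c))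
     + (\<Sum>k\<in>{1..K}. C k * ((\<Sum>c\<in>UNIV. ddt_form (theta_part k c) a)
         + (\<Sum>c\<in>UNIV. scalar_fps ((-1) ^ k) * V k c * pd_fps a (pos_fps c))))"
    unfolding pd_lagrangian_expand moment_pos_ddt_pd_by_parts C_def V_def by (simp add: mult.assoc)
  also have "\<dots> = (\<Sum>c\<in>UNIV. grad_potential_fps c * pd_fps a (pos_fps c)) + ddt_form theta a
     + (\<Sum>k\<in>{1..K}. C k * (\<Sum>c\<in>UNIV. scalar_fps ((-1) ^ k) * V k c * pd_fps a (pos_fps c)))"
    unfolding ddt_form_theta C_def by (simp add: distrib_left sum.distrib mult.assoc)
  also have "(\<Sum>k\<in>{1..K}. C k * (\<Sum>c\<in>UNIV. scalar_fps ((-1) ^ k) * V k c * pd_fps a (pos_fps c)))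
      = - (\<Sum>c\<in>UNIV. (\<Sum>k\<in>{1..K}. scalar_fps (eq_coeff k) * fps_X ^ (2 * k - 2) * V k c)
          * pd_fps a (pos_fps c))"
  proof -
    have "C k * (scalar_fps ((-1) ^ k) * V k c * pd_fps a (pos_fps c))
        = - (scalar_fps (eq_coeff k) * fps_X ^ (2 * k - 2) * V k c * pd_fps a (pos_fps c))" for k c
    proof -
      have "C k * (scalar_fps ((-1) ^ k) * V k c * pd_fps a (pos_fps c))
          = scalar_fps (lagr_coeff k * (-1) ^ k) * fps_X ^ (2 * k - 2) * V k c
              * pd_fps a (pos_fps c)"
        unfolding C_def scalar_fps_mult by (simp add: ac_simps)
      then show ?thesis unfolding lagr_coeff_sign scalar_fps_uminus by simp
    qed
    then have "(\<Sum>k\<in>{1..K}. C k * (\<Sum>c\<in>UNIV. scalar_fps ((-1) ^ k) * V k c * pd_fps a (pos_fps c)))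
        = (\<Sum>k\<in>{1..K}. \<Sum>c\<in>UNIV.
            - (scalar_fps (eq_coeff k) * fps_X ^ (2 * k - 2) * V k c * pd_fps a (pos_fps c)))"
      by (simp add: sum_distrib_left)
    also have "\<dots> = (\<Sum>c\<in>UNIV. \<Sum>k\<in>{1..K}.
        - (scalar_fps (eq_coeff k) * fps_X ^ (2 * k - 2) * V k c * pd_fps a (pos_fps c)))"
      by (rule sum.swap)
    also have "\<dots> = - (\<Sum>c\<in>UNIV. (\<Sum>k\<in>{1..K}. scalar_fps (eq_coeff k) * fps_X ^ (2 * k - 2) * V k c)
        * pd_fps a (pos_fps c))"
      by (simp add: sum_negf sum_distrib_right)
    finally show ?thesis .
  qed
  also have "(\<Sum>c\<in>UNIV. grad_potential_fps c * pd_fps a (pos_fps c)) + ddt_form theta a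
     + - (\<Sum>c\<in>UNIV. (\<Sum>k\<in>{1..K}. scalar_fps (eq_coeff k) * fps_X ^ (2 * k - 2) * V k c)
         * pd_fps a (pos_fps c))
     = ddt_form theta a + (\<Sum>c\<in>UNIV. el_residual c * pd_fps a (pos_fps c))"
    unfolding el_residual_def V_def by (simp add: left_diff_distrib sum_subtractf)
  finally show ?thesis .
qed

definition dtheta :: "('n + 'n) \<Rightarrow> ('n + 'n) \<Rightarrow> ('n + 'n) fun_fps" where
  "dtheta a b = pd_fps a (theta b) - pd_fps b (theta a)"

definition hamiltonian_fps :: "('n + 'n) fun_fps" where
  "hamiltonian_fps = (\<Sum>b\<in>UNIV. theta b * field_fps b) - lagrangian"

definition Jmod :: "nat \<Rightarrow> real^('n + 'n) \<Rightarrow> real^('n + 'n)^('n + 'n)" where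
  "Jmod i z = (\<chi> a b. fps_nth (dtheta a b) i z)"

definition Hmod :: "nat \<Rightarrow> real^('n + 'n) \<Rightarrow> real" where
  "Hmod i = fps_nth hamiltonian_fps i"

lemma smooth_fps_dtheta[simp, intro]: "smooth_fps (dtheta a b)" unfolding dtheta_def by auto
lemma smooth_fps_hamiltonian_fps[simp, intro]: "smooth_fps hamiltonian_fps"
    unfolding hamiltonian_fps_def by (auto intro!: smooth_fps_sum smooth_fps_mult)

lemma smooth_Jmod: "smooth (Jmod i)"
  unfolding Jmod_def[abs_def] using smooth_fps_dtheta unfolding smooth_fps_def
  by (intro smooth_vec_lambda) auto

lemma smooth_Hmod: "smooth (Hmod i)"
  using smooth_fps_hamiltonian_fps unfolding smooth_fps_def Hmod_def by auto

lemma dtheta_field_eq: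
  "(\<Sum>b\<in>UNIV. dtheta a b * field_fps b)
      = pd_fps a hamiltonian_fps + (\<Sum>c\<in>UNIV. el_residual c * pd_fps a (pos_fps c))"
proof -
  have "pd_fps a hamiltonian_fps
      = (\<Sum>b\<in>UNIV. pd_fps a (theta b) * field_fps b + theta b * pd_fps a (field_fps b))
      - pd_fps a lagrangian"
    unfolding hamiltonian_fps_def by (simp add: pd_fps_diff pd_fps_sum pd_fps_mult smooth_fps_sum)
  also have "pd_fps a lagrangian
      = (\<Sum>b\<in>UNIV. field_fps b * pd_fps b (theta a)) + (\<Sum>b\<in>UNIV. theta b * pd_fps a (field_fps b))
      + (\<Sum>c\<in>UNIV. el_residual c * pd_fps a (pos_fps c))"
    unfolding pd_lagrangian_eq ddt_form_def ddt_def ..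
  finally have "pd_fps a hamiltonian_fps
      = (\<Sum>b\<in>UNIV. pd_fps a (theta b) * field_fps b) - (\<Sum>b\<in>UNIV. field_fps b * pd_fps b (theta a))
      - (\<Sum>c\<in>UNIV. el_residual c * pd_fps a (pos_fps c))"
    by (simp add: sum.distrib algebra_simps)
  moreover have "(\<Sum>b\<in>UNIV. dtheta a b * field_fps b)
      = (\<Sum>b\<in>UNIV. pd_fps a (theta b) * field_fps b) - (\<Sum>b\<in>UNIV. field_fps b * pd_fps b (theta a))"
    unfolding dtheta_def by (simp add: algebra_simps sum_subtractf)
  ultimately show ?thesis by simp
qed

lemma Jmod_field_eq_grad_Hmod:
  assumes E0: "\<And>c j. j \<le> m \<Longrightarrow> fps_nth (el_residual c) j = 0"
  shows "(\<Sum>i\<le>m. Jmod i z *v field_coeff (m - i) z) = grad (Hmod m) z"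
proof -
  have "(\<Sum>i\<le>m. Jmod i z *v field_coeff (m - i) z) $ a = grad (Hmod m) z $ a" for a
  proof -
    have "(\<Sum>i\<le>m. Jmod i z *v field_coeff (m - i) z) $ a
        = (\<Sum>i\<le>m. \<Sum>b\<in>UNIV. fps_nth (dtheta a b) i z * field_coeff (m - i) z $ b)"
      by (simp add: sum_component matrix_vector_mult_def Jmod_def)
    also have "\<dots> = (\<Sum>b\<in>UNIV. \<Sum>i\<le>m. fps_nth (dtheta a b) i z * fps_nth (field_fps b) (m - i) z)"
      by (subst sum.swap) (simp add: field_fps_def)
    also have "\<dots> = fps_nth (\<Sum>b\<in>UNIV. dtheta a b * field_fps b) m z"
      by (simp add: fps_nth_sum_apply fps_nth_mult_apply)
    also have "\<dots> = fps_nth (pd_fps a hamiltonian_fps) m z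
        + (\<Sum>c\<in>UNIV. fps_nth (el_residual c * pd_fps a (pos_fps c)) m z)"
      unfolding dtheta_field_eq by (simp add: fps_nth_sum_apply)
    also have "(\<Sum>c\<in>UNIV. fps_nth (el_residual c * pd_fps a (pos_fps c)) m z) = 0"
      by (simp add: fps_nth_mult_apply E0)
    also have "fps_nth (pd_fps a hamiltonian_fps) m z = grad (Hmod m) z $ a"
      by (simp add: pd_fps_def grad_def Hmod_def)
    finally show ?thesis by simp
  qed
  then show ?thesis by (simp add: vec_eq_iff)
qed

lemma dtheta_skew: "fps_nth (dtheta b a) i z = - fps_nth (dtheta a b) i z"
    unfolding dtheta_def by simp

lemma dtheta_cyclic: "pd_fps c (dtheta a b) + pd_fps a (dtheta b c) + pd_fps b (dtheta c a) = 0"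
proof -
  have 1: "pd_fps c (pd_fps a (theta b)) = pd_fps a (pd_fps c (theta b))"
      by (rule pd_fps_commute) simp
  have 2: "pd_fps c (pd_fps b (theta a)) = pd_fps b (pd_fps c (theta a))"
      by (rule pd_fps_commute) simp
  have 3: "pd_fps a (pd_fps b (theta c)) = pd_fps b (pd_fps a (theta c))"
      by (rule pd_fps_commute) simp
  show ?thesis unfolding dtheta_def by (simp add: pd_fps_diff 1 2 3)
qed

lemma closed_2form_Jmod: "closed_2form (\<lambda>z. \<Sum>i\<le>N. h ^ i *\<^sub>R Jmod i z)"
  unfolding closed_2form_def
proof (intro conjI allI)
  fix z
  show "transpose (\<Sum>i\<le>N. h ^ i *\<^sub>R Jmod i z) = - (\<Sum>i\<le>N. h ^ i *\<^sub>R Jmod i z)"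
  proof -
    have "transpose (\<Sum>i\<le>N. h ^ i *\<^sub>R Jmod i z) $ a $ b
        = (- (\<Sum>i\<le>N. h ^ i *\<^sub>R Jmod i z)) $ a $ b" for a b
    proof -
      have "transpose (\<Sum>i\<le>N. h ^ i *\<^sub>R Jmod i z) $ a $ b = (\<Sum>i\<le>N. h ^ i * fps_nth (dtheta b a) i z)"
        by (simp add: transpose_def sum_component Jmod_def)
      also have "\<dots> = - (\<Sum>i\<le>N. h ^ i * fps_nth (dtheta a b) i z)"
        by (simp only: dtheta_skew[of b a] mult_minus_right sum_negf)
      also have "\<dots> = (- (\<Sum>i\<le>N. h ^ i *\<^sub>R Jmod i z)) $ a $ b"
        by (simp add: sum_component Jmod_def)
      finally show ?thesis .
    qed
    then show ?thesis by (simp add: vec_eq_iff)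
  qed
next
  fix z a b c
  have ent: "(\<lambda>x. (\<Sum>i\<le>N. h ^ i *\<^sub>R Jmod i x) $ a $ b)
      = (\<lambda>x. \<Sum>i\<le>N. h ^ i * fps_nth (dtheta a b) i x)" for a b
    by (simp add: sum_component Jmod_def)
  have pdent: "pd (\<lambda>x. (\<Sum>i\<le>N. h ^ i *\<^sub>R Jmod i x) $ a $ b) c z
      = (\<Sum>i\<le>N. h ^ i * fps_nth (pd_fps c (dtheta a b)) i z)" for a b c
    unfolding ent using smooth_fps_dtheta[of a b] unfolding smooth_fps_def
    by (subst pd_linear_combination) (auto simp: pd_fps_def)
  have "(\<Sum>i\<le>N. h ^ i * fps_nth (pd_fps c (dtheta a b)) i z)
      + (\<Sum>i\<le>N. h ^ i * fps_nth (pd_fps a (dtheta b c)) i z)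
      + (\<Sum>i\<le>N. h ^ i * fps_nth (pd_fps b (dtheta c a)) i z)
      = (\<Sum>i\<le>N. h ^ i * fps_nth
          (pd_fps c (dtheta a b) + pd_fps a (dtheta b c) + pd_fps b (dtheta c a)) i z)"
    by (simp add: sum.distrib distrib_left)
  also have "\<dots> = 0" unfolding dtheta_cyclic by simp
  finally show "pd (\<lambda>x. (\<Sum>i\<le>N. h ^ i *\<^sub>R Jmod i x) $ a $ b) c z
      + pd (\<lambda>x. (\<Sum>i\<le>N. h ^ i *\<^sub>R Jmod i x) $ b $ c) a z
      + pd (\<lambda>x. (\<Sum>i\<le>N. h ^ i *\<^sub>R Jmod i x) $ c $ a) b z = 0"
    unfolding pdent .
qed

lemma ddt_pos_fps: "ddt (pos_fps c) = vel_fps c"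
  unfolding pos_fps_def ddt_component
  by (rule fps_ext, rule ext) (simp add: field_fps_def field_coeff_def vel_fps_def join_def vof_def)

lemma ddt_vel_fps: "ddt (vel_fps c) = coeff_fps f c"
  unfolding vel_fps_def ddt_component
  by (rule fps_ext, rule ext) (simp add: field_fps_def field_coeff_def coeff_fps_def join_def)

lemma pos_ddt_1: "pos_ddt 1 c = vel_fps c" unfolding pos_ddt_def by (simp add: ddt_pos_fps)

lemma pos_ddt_add_2: "pos_ddt (j + 2) c = coeff_fps (Dpow f j f) c"
proof -
  have "pos_ddt (j + 2) c = (ddt ^^ j) ((ddt ^^ 2) (pos_fps c))"
      unfolding pos_ddt_def by (simp only: funpow_add comp_def)
  also have "(ddt ^^ 2) (pos_fps c) = coeff_fps f c"
    by (simp add: numeral_2_eq_2 ddt_pos_fps ddt_vel_fps)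
  also have "(ddt ^^ j) (coeff_fps f c) = coeff_fps (Dpow f j f) c"
    by (rule ddt_pow_coeff_fps[OF lifted_smooth_f])
  finally show ?thesis .
qed

lemma pos_ddt_even: "1 \<le> k \<Longrightarrow> pos_ddt (2 * k) c = coeff_fps (Dpow f (2 * k - 2) f) c"
proof -
  assume "1 \<le> k"
  then have "2 * k - 2 + 2 = 2 * k" by simp
  then show ?thesis using pos_ddt_add_2[of "2 * k - 2" c] by simp
qed

lemma el_residual_coeff_sum: "fps_nth (el_residual c) j z = (if j = 0 then pd U c (yof z) else 0)
   - (\<Sum>k\<in>{1..K}. if 2 * k - 2 \<le> j
        then eq_coeff k * (M k *v Dpow f (2 * k - 2) f (j - (2 * k - 2)) (yof z) (vof z)) $ c
            else 0)"
proof -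
  have V: "fps_nth (\<Sum>d\<in>UNIV. moment_fps k c d * pos_ddt (2 * k) d) i z
      = (M k *v Dpow f (2 * k - 2) f i (yof z) (vof z)) $ c"
    if "k \<in> {1..K}" for k i
  proof -
    have "fps_nth (moment_fps k c d * pos_ddt (2 * k) d) i z
        = M k $ c $ d * Dpow f (2 * k - 2) f i (yof z) (vof z) $ d" for d
      using that unfolding moment_fps_def scalar_fps_def by (simp add: pos_ddt_even coeff_fps_def)
    then show ?thesis by (simp add: fps_nth_sum_apply matrix_vector_mult_def)
  qed
  have "fps_nth (el_residual c) j z = fps_nth (grad_potential_fps c) j z
     - (\<Sum>k\<in>{1..K}. fps_nth (scalar_fps (eq_coeff k) * fps_X ^ (2 * k - 2)
         * (\<Sum>d\<in>UNIV. moment_fps k c d * pos_ddt (2 * k) d)) j z)"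
    unfolding el_residual_def by (simp only: fps_sub_nth fun_diff_def fps_nth_sum_apply)
  also have "\<dots> = fps_nth (grad_potential_fps c) j z
     - (\<Sum>k\<in>{1..K}. if 2 * k - 2
         \<le> j then eq_coeff k * fps_nth (\<Sum>d\<in>UNIV. moment_fps k c d * pos_ddt (2 * k) d)
         (j - (2 * k - 2)) z else 0)"
    by (simp only: fps_nth_scalar_X_power_mult)
  also have "\<dots> = fps_nth (grad_potential_fps c) j z
     - (\<Sum>k\<in>{1..K}. if 2 * k - 2
         \<le> j then eq_coeff k * (M k *v Dpow f (2 * k - 2) f (j - (2 * k - 2)) (yof z) (vof z)) $ c
         else 0)"
    by (intro arg_cong2[where f="(-)"] refl sum.cong) (auto simp: V)
  also have "fps_nth (grad_potential_fps c) j z = (if j = 0 then pd U c (yof z) else 0)"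
    unfolding grad_potential_fps_def by simp
  finally show ?thesis .
qed

end

locale normalized_lagrangian = modified_lagrangian f U M K
  for f :: "nat \<Rightarrow> real^'n::finite \<Rightarrow> real^'n \<Rightarrow> real^'n" and U M K +
  assumes M_1: "M 1 = mat 1" and K_pos: "1 \<le> K"
begin

lemma lagr_coeff_1: "lagr_coeff 1 = 1" by (simp add: lagr_coeff_def)

lemma el_residual_coeff:
  assumes "j div 2 < K"
  shows "fps_nth (el_residual c) j z
      = (if j = 0 then pd U c (yof z) else 0) - f j (yof z) (vof z) $ c
    - (\<Sum>k=2..j div 2 + 1. eq_coeff k
        * (M k *v Dpow f (2*k - 2) f (j - (2*k - 2)) (yof z) (vof z)) $ c)"
proof -
  define T where "T k = eq_coeff k
      * (M k *v Dpow f (2*k - 2) f (j - (2*k - 2)) (yof z) (vof z)) $ c" for k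
  have "(\<Sum>k\<in>{1..K}. if 2 * k - 2 \<le> j then T k else 0)
      = T 1 + (\<Sum>k\<in>{2..K}. if 2 * k - 2 \<le> j then T k else 0)"
    using K_pos by (subst sum.atLeast_Suc_atMost) (auto simp: numeral_2_eq_2)
  also have "(\<Sum>k\<in>{2..K}. if 2 * k - 2 \<le> j then T k else 0) = (\<Sum>k\<in>{k \<in> {2..K}. 2 * k - 2 \<le> j}. T k)"
    by (rule sum.inter_filter[symmetric]) simp
  also have "{k \<in> {2..K}. 2 * k - 2 \<le> j} = {2..j div 2 + 1}"
    using assms by auto
  also have "T 1 = f j (yof z) (vof z) $ c"
    using M_1 by (simp add: T_def eq_coeff_def)
  finally show ?thesis
    unfolding el_residual_coeff_sum T_def by simp
qed

lemma moment_pos_ddt_1: "moment_pos_ddt 1 c = vel_fps c"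
proof -
  have "moment_fps 1 c d * pos_ddt 1 d = (if d = c then vel_fps c else 0)" for d
    unfolding moment_fps_def M_1 pos_ddt_1 by (auto simp: mat_def)
  then show ?thesis unfolding moment_pos_ddt_def by simp
qed

lemma moment_pos_ddt_Suc_0[simp]: "moment_pos_ddt (Suc 0) c = vel_fps c"
    using moment_pos_ddt_1 by simp
lemma pos_ddt_Suc_0[simp]: "pos_ddt (Suc 0) c = vel_fps c" using pos_ddt_1 by simp

lemma sum_only_first: "(\<Sum>k\<in>{1..K}. (if 2 * k - 2 = 0 then g k else 0)) = g 1"
proof -
  have "(\<Sum>k\<in>{1..K}. (if 2 * k - 2 = 0 then g k else 0)) = (\<Sum>k\<in>{1..K}. (if k = 1 then g k else 0))"
    by (intro sum.cong refl) auto
  also have "\<dots> = g 1" using K_pos by simp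
  finally show ?thesis .
qed

lemma theta_coeff_0: "fps_nth (theta b) 0 z = (\<Sum>c\<in>UNIV. (if b = Inl c then 1 else 0) * z $ Inr c)"
proof -
  have "fps_nth (theta b) 0 z =
      (\<Sum>k\<in>{1..K}. (if 2 * k - 2
      = 0 then lagr_coeff k * fps_nth (\<Sum>c\<in>UNIV. theta_part k c b) 0 z else 0))"
    unfolding theta_def by (simp only: fps_nth_sum_apply fps_nth_scalar_X_power_mult_0)
  also have "\<dots> = fps_nth (\<Sum>c\<in>UNIV. theta_part 1 c b) 0 z"
    by (simp only: sum_only_first lagr_coeff_1 mult_1)
  also have "\<dots> = (\<Sum>c\<in>UNIV. (if b = Inl c then 1 else 0) * z $ Inr c)"
    unfolding theta_part_def ibp_form_def
    by (simp add: fps_nth_sum_apply moment_pos_ddt_1 vel_fps_def pd_fps_pos_fps mult.commute)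
  finally show ?thesis .
qed

lemma lagrangian_coeff_0: "fps_nth lagrangian 0 z
    = U (yof z) + (1/2) * (\<Sum>c\<in>UNIV. z $ Inr c * z $ Inr c)"
proof -
  have "fps_nth lagrangian 0 z
      = U (yof z) + (\<Sum>k\<in>{1..K}.
      (if 2 * k - 2 = 0 then lagr_coeff k / 2
      * fps_nth (\<Sum>c\<in>UNIV. pos_ddt k c * moment_pos_ddt k c) 0 z else 0))"
    unfolding lagrangian_def potential_fps_def
    by (simp only: fps_nth_sum_apply fps_nth_scalar_X_power_mult_0 fps_add_nth
        plus_fun_apply) simp
  also have "\<dots> = U (yof z) + (1/2) * fps_nth (\<Sum>c\<in>UNIV. pos_ddt 1 c * moment_pos_ddt 1 c) 0 z"
    by (simp only: sum_only_first lagr_coeff_1)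
  also have "\<dots> = U (yof z) + (1/2) * (\<Sum>c\<in>UNIV. z $ Inr c * z $ Inr c)"
    by (simp add: fps_nth_sum_apply pos_ddt_1 moment_pos_ddt_1 vel_fps_def)
  finally show ?thesis .
qed

lemma Jmod_0: "Jmod 0 z = Jstd"
proof -
  have pth: "pd (fps_nth (theta b) 0) a z
      = (\<Sum>c\<in>UNIV. (if b = Inl c then 1 else 0) * (if a = Inr c then 1 else 0))" for a b
  proof -
    have "fps_nth (theta b) 0 = (\<lambda>z. \<Sum>c\<in>UNIV. (if b = Inl c then 1 else 0) * z $ Inr c)"
      using theta_coeff_0 by auto
    then show ?thesis by (simp only:)
        (subst pd_linear_combination, auto intro: smooth_vec_nth simp: pd_component)
  qed
  show ?thesis
    unfolding Jmod_def dtheta_def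
    by (simp add: vec_eq_iff Jstd_def pd_fps_def fun_diff_def pth sum_indicator_mult
        split: sum.splits)
qed

lemma Hmod_0: "Hmod 0 = Ham U"
proof (rule ext)
  fix z :: "real^('n + 'n)"
  have "Hmod 0 z = (\<Sum>b\<in>UNIV. fps_nth (theta b) 0 z * field_coeff 0 z $ b) - fps_nth lagrangian 0 z"
    unfolding Hmod_def hamiltonian_fps_def
    by (simp add: fps_nth_sum_apply field_fps_def fun_diff_def)
  also have "(\<Sum>b\<in>UNIV. fps_nth (theta b) 0 z * field_coeff 0 z $ b)
      = (\<Sum>c\<in>UNIV. z $ Inr c * z $ Inr c)"
  proof -
    have "(\<Sum>b\<in>UNIV. fps_nth (theta b) 0 z * field_coeff 0 z $ b)
        = (\<Sum>b\<in>UNIV. \<Sum>c\<in>UNIV. (if b = Inl c then z $ Inr c * field_coeff 0 z $ b else 0))"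
      unfolding theta_coeff_0 by (simp add: sum_distrib_right if_distrib[of "\<lambda>x. x * _"]
          cong: if_cong)
    also have "\<dots> = (\<Sum>c\<in>UNIV. \<Sum>b\<in>UNIV. (if b = Inl c then z $ Inr c * field_coeff 0 z $ b else 0))"
      by (rule sum.swap)
    also have "\<dots> = (\<Sum>c\<in>UNIV. z $ Inr c * field_coeff 0 z $ Inl c)" by simp
    also have "\<dots> = (\<Sum>c\<in>UNIV. z $ Inr c * z $ Inr c)"
      by (simp add: field_coeff_def join_def vof_def)
    finally show ?thesis .
  qed
  also have "(\<Sum>c\<in>UNIV. z $ Inr c * z $ Inr c) - fps_nth lagrangian 0 z = Ham U z"
    unfolding lagrangian_coeff_0 Ham_def
    by (simp add: power2_norm_eq_inner inner_vec_def vof_def)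
  finally show "Hmod 0 z = Ham U z" .
qed

end

section \<open>The multistep method\<close>

lemma transpose_sum: "transpose (\<Sum>i\<in>S. A i) = (\<Sum>i\<in>S. transpose (A i :: 'a::comm_ring_1^'n^'m))"
  by (induction S rule: infinite_finite_induct) (simp_all add: transpose_def vec_eq_iff)

lemma symmetric_moment:
  assumes "\<forall>j\<in>{1..s div 2}. transpose (A j) = A j"
  shows "transpose (moment s A k) = moment s A k"
  unfolding moment_def transpose_sum transpose_scalar using assms by (intro sum.cong) auto

locale multistep_modified_equation =
  fixes s N :: nat
    and A :: "nat \<Rightarrow> real^'n::finite^'n"
    and U :: "real^'n \<Rightarrow> real"
    and g :: "nat \<Rightarrow> real^'n \<Rightarrow> real^'n \<Rightarrow> real^'n"
  assumes A_symmetric: "\<forall>j\<in>{1..s div 2}. transpose (A j) = A j"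
    and A_normalized: "(\<Sum>j=1..s div 2. (real j ^ 2) *\<^sub>R A j) = mat 1"
    and U_smooth: "smooth U"
    and modified_equation: "is_modified_equation s A U N g"
begin

text \<open>Nothing is assumed about the \<open>g i\<close> with \<open>i > N\<close>, so they are replaced by \<open>0\<close>.\<close>

definition modeq_coeff :: "nat \<Rightarrow> real^'n \<Rightarrow> real^'n \<Rightarrow> real^'n" where
  "modeq_coeff i = (if i \<le> N then fser U g i else (\<lambda>y v. 0))"

lemma modeq_coeff_0: "modeq_coeff 0 = (\<lambda>y v. grad U y)"
  by (intro ext) (simp add: modeq_coeff_def fser_def)

lemma Dpow_fser_eq_Dpow_modeq_coeff:
  "j \<le> N \<Longrightarrow> Dpow (fser U g) r (fser U g) j = Dpow modeq_coeff r modeq_coeff j"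
  by (rule Dpow_cong[of N]) (auto simp: modeq_coeff_def)

lemma modeq_coeff_recursion:
  assumes "1 \<le> m" "m \<le> N"
  shows "modeq_coeff m y v = - (\<Sum>k=2..m div 2 + 1.
           (2 / fact (2*k)) *\<^sub>R
               (moment s A k *v Dpow modeq_coeff (2*k - 2) modeq_coeff (m - (2*k - 2)) y v))"
proof -
  have "g m y v = - (\<Sum>k=2..m div 2 + 1.
      (2 / fact (2*k)) *\<^sub>R (moment s A k
          *v Dpow (fser U g) (2*k - 2) (fser U g) (m - (2*k - 2)) y v))"
    using modified_equation assms unfolding is_modified_equation_def by blast
  then have "modeq_coeff m y v = - (\<Sum>k=2..m div 2 + 1.
      (2 / fact (2*k)) *\<^sub>R (moment s A k
          *v Dpow (fser U g) (2*k - 2) (fser U g) (m - (2*k - 2)) y v))"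
    using assms by (simp add: modeq_coeff_def fser_def)
  also have "\<dots> = - (\<Sum>k=2..m div 2 + 1.
      (2 / fact (2*k)) *\<^sub>R (moment s A k
          *v Dpow modeq_coeff (2*k - 2) modeq_coeff (m - (2*k - 2)) y v))"
  proof (intro arg_cong[where f=uminus] sum.cong refl)
    fix k
    have "m - (2*k - 2) \<le> N" using assms(2) by (meson diff_le_self order_trans)
    then show "(2 / fact (2*k)) *\<^sub>R
        (moment s A k *v Dpow (fser U g) (2*k - 2) (fser U g) (m - (2*k - 2)) y v)
      = (2 / fact (2*k)) *\<^sub>R (moment s A k
          *v Dpow modeq_coeff (2*k - 2) modeq_coeff (m - (2*k - 2)) y v)"
      by (simp only: Dpow_fser_eq_Dpow_modeq_coeff)
  qed
  finally show ?thesis .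
qed

text \<open>The right-hand side of \<open>modeq_coeff_recursion\<close> only involves coefficients of index \<open>< m\<close>.\<close>

lemma lifted_smooth_modeq_coeff: "lifted_smooth modeq_coeff"
  unfolding lifted_smooth_def
proof
  fix i show "smooth (\<lambda>z. modeq_coeff i (yof z) (vof z))"
  proof (induction i rule: less_induct)
    case (less i)
    consider "i = 0" | "N < i" | "1 \<le> i" "i \<le> N"
      by (cases "i = 0"; cases "N < i") auto
    then show ?case
    proof cases
      case 1
      then show ?thesis using smooth_grad_yof[OF U_smooth] by (simp add: modeq_coeff_0)
    next
      case 2
      then show ?thesis by (simp add: modeq_coeff_def)
    next
      case 3
      define lower where "lower j = (if j < i then modeq_coeff j else (\<lambda>y v. 0))" for j
      have "lifted_smooth lower"
        using less.IH by (auto simp: lifted_smooth_def lower_def)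
      then have lower_smooth: "lifted_smooth (Dpow lower r lower)" for r
        using lifted_smooth_Dpow by blast
      have Dpow_lower: "Dpow modeq_coeff (2*k - 2) modeq_coeff (i - (2*k - 2))
          = Dpow lower (2*k - 2) lower (i - (2*k - 2))" if "k \<in> {2..i div 2 + 1}" for k
        using that 3 by (intro Dpow_cong[of "i - (2*k - 2)"]) (auto simp: lower_def)
      have "(\<lambda>z. modeq_coeff i (yof z) (vof z)) = (\<lambda>z. - (\<Sum>k=2..i div 2 + 1.
          (2 / fact (2*k)) *\<^sub>R
              (moment s A k *v Dpow lower (2*k - 2) lower (i - (2*k - 2)) (yof z) (vof z))))"
        unfolding modeq_coeff_recursion[OF 3]
        by (intro ext arg_cong[where f=uminus] sum.cong refl) (simp only: Dpow_lower)
      moreover have "smooth (\<lambda>z. - (\<Sum>k=2..i div 2 + 1.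
          (2 / fact (2*k)) *\<^sub>R
              (moment s A k *v Dpow lower (2*k - 2) lower (i - (2*k - 2)) (yof z) (vof z))))"
        using lower_smooth unfolding lifted_smooth_def
        by (intro smooth_uminus smooth_sum smooth_scaleR smooth_const smooth_matrix_vector_mult) auto
      ultimately show ?thesis by simp
    qed
  qed
qed

sublocale normalized_lagrangian modeq_coeff U "moment s A" "Suc N"
proof unfold_locales
  show "smooth (\<lambda>z. modeq_coeff i (yof z) (vof z))" for i
    using lifted_smooth_modeq_coeff by (simp add: lifted_smooth_def)
  show "transpose (moment s A k) = moment s A k" for k
    using A_symmetric by (rule symmetric_moment)
  show "moment s A 1 = mat 1"
    using A_normalized by (simp add: moment_def)
qed (simp_all add: U_smooth)

lemma el_residual_vanishes: "j \<le> N \<Longrightarrow> fps_nth (el_residual c) j = 0"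
proof (rule ext)
  fix z :: "real^('n + 'n)"
  assume "j \<le> N"
  then have "j div 2 < Suc N" using div_le_dividend[of j 2] by linarith
  show "fps_nth (el_residual c) j z = 0 z"
  proof (cases "j = 0")
    case True
    then show ?thesis using \<open>j div 2 < Suc N\<close>
      by (simp add: el_residual_coeff modeq_coeff_0 grad_def)
  next
    case False
    then show ?thesis
      using \<open>j \<le> N\<close> \<open>j div 2 < Suc N\<close>
      by (simp add: el_residual_coeff modeq_coeff_recursion eq_coeff_def sum_component)
  qed
qed

lemma Fmod_eq_field_coeff: "i \<le> N \<Longrightarrow> Fmod U g i z = field_coeff i z"
  by (simp add: Fmod_def field_coeff_def modeq_coeff_def fser_def)

end

theorem theorem2p2:
  fixes s N :: nat
    and A :: "nat \<Rightarrow> real^'n^'n"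
    and U :: "real^'n \<Rightarrow> real"
    and g :: "nat \<Rightarrow> real^'n \<Rightarrow> real^'n \<Rightarrow> real^'n"
  assumes "even s"
    and "\<forall>j\<in>{1..s div 2}. transpose (A j) = A j"
    and "(\<Sum>j=1..s div 2. (real j ^ 2) *\<^sub>R A j) = mat 1"
    and "smooth U"
    and "is_modified_equation s A U N g"
  shows "\<exists>(Jc :: nat \<Rightarrow> real^('n + 'n) \<Rightarrow> real^('n + 'n)^('n + 'n))
           (Hc :: nat \<Rightarrow> real^('n + 'n) \<Rightarrow> real).
           Jc 0 = (\<lambda>z. Jstd) \<and> Hc 0 = Ham U
         \<and> (\<forall>i\<le>N. smooth (Jc i) \<and> smooth (Hc i))
         \<and> (\<forall>h::real. closed_2form (\<lambda>z. \<Sum>i\<le>N. h ^ i *\<^sub>R Jc i z))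
         \<and> (\<forall>m\<le>N. \<forall>z. (\<Sum>a\<le>m. Jc a z *v Fmod U g (m - a) z) = grad (Hc m) z)"
proof -
  interpret multistep_modified_equation s N A U g
    using assms(2-5) by unfold_locales
  show ?thesis
  proof (intro exI conjI allI impI)
    show "Jmod 0 = (\<lambda>z. Jstd)" by (rule ext) (rule Jmod_0)
    show "Hmod 0 = Ham U" by (rule Hmod_0)
    show "smooth (Jmod i)" "smooth (Hmod i)" for i by (rule smooth_Jmod, rule smooth_Hmod)
    show "closed_2form (\<lambda>z. \<Sum>i\<le>N. h ^ i *\<^sub>R Jmod i z)" for h by (rule closed_2form_Jmod)
    fix m z assume "m \<le> N"
    then have "(\<Sum>a\<le>m. Jmod a z *v Fmod U g (m - a) z) = (\<Sum>a\<le>m. Jmod a z *v field_coeff (m - a) z)"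
      by (simp add: Fmod_eq_field_coeff)
    also have "\<dots> = grad (Hmod m) z"
      using \<open>m \<le> N\<close> by (intro Jmod_field_eq_grad_Hmod) (simp add: el_residual_vanishes)
    finally show "(\<Sum>a\<le>m. Jmod a z *v Fmod U g (m - a) z) = grad (Hmod m) z" .
  qed
qed

end
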